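(* Under the standing setup (C1)–(C4), there is a constant $C>0$ such that for all $n\in\mathbb N$, $$E\Big(\sum_{k=0}^nR(k)\Big)^2\le Cn,\qquad\text{where } R(k)=\prod_{j=1}^\ell X_j(q_j(k))-\prod_{j=1}^\ell a_j .$$
   Context: Standing setup. $(\Omega,\mathcal F,P)$ is a probability space, $\ell\ge1$, $X_1,\dots,X_\ell$ are real stationary processes $X_j(n)$, $n\ge0$, with $|X_j(n)|\le D$ a.s. $\{\mathcal F_{kl}\}$ is a family of sub-$\sigma$-algebras, $\mathcal F_{kl}\subset\mathcal F_{k'l'}$ for $k'\le k$, $l'\ge l$. $\alpha(n)=\sup_{k\ge0}\sup_{A\in\mathcal F_{-\infty,k},B\in\mathcal F_{k+n,\infty}}|P(A\cap B)-P(A)P(B)|$, $\beta_j(n)=\sup_{m\ge0}E|X_j(m)-E(X_j(m)\mid\mathcal F_{m-n,m+n})|$. (C1): $\alpha(n)+\max_j\beta_j(n)\le\kappa^{-1}e^{-\kappa n}$ for some $\kappa>0$ and all $n$. (C2): $q_1(n)=rn+p$ with integers $r>0,p\ge0$. There exist $\gamma\in(0,1)$, $n_0>1$ such that for $n\ge n_0$: (C3) $q_j(n+1)\ge q_j(n)+n^\gamma$ for $j=2,\dots,\ell$; (C4) $q_{j+1}([n^{1-\gamma}])\ge q_j(n)n^\gamma$ for $j=1,\dots,\ell-1$. All $q_j$ take nonnegative integer values on nonnegative integers. $a_j=EX_j(0)$. *)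

theory Defs
  imports "HOL-Probability.Probability"
begin

definition ZInf :: "ereal set" where
  "ZInf = {-\<infinity>, \<infinity>} \<union> range (\<lambda>z::int. ereal (real_of_int z))"

definition stationary :: "'a measure \<Rightarrow> (nat \<Rightarrow> 'a \<Rightarrow> real) \<Rightarrow> bool" where
  "stationary M Y \<longleftrightarrow>
     (\<forall>m::nat. distr M (\<Pi>\<^sub>M i\<in>(UNIV::nat set). (borel::real measure)) (\<lambda>\<omega> i. Y (i + m) \<omega>)
             = distr M (\<Pi>\<^sub>M i\<in>(UNIV::nat set). (borel::real measure)) (\<lambda>\<omega> i. Y i \<omega>))"

definition mixing_alpha :: "'a measure \<Rightarrow> (ereal \<Rightarrow> ereal \<Rightarrow> 'a measure) \<Rightarrow> nat \<Rightarrow> real" where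
  "mixing_alpha M F n = Sup {\<bar>measure M (A \<inter> B) - measure M A * measure M B\<bar> | k A B.
       A \<in> sets (F (-\<infinity>) (ereal (real (k::nat)))) \<and> B \<in> sets (F (ereal (real k + real n)) \<infinity>)}"

definition approx_beta :: "'a measure \<Rightarrow> (ereal \<Rightarrow> ereal \<Rightarrow> 'a measure) \<Rightarrow> (nat \<Rightarrow> 'a \<Rightarrow> real) \<Rightarrow> nat \<Rightarrow> real" where
  "approx_beta M F Y n = Sup (range (\<lambda>m::nat.
       (\<integral>\<omega>. \<bar>Y m \<omega> - real_cond_exp M (F (ereal (real m - real n)) (ereal (real m + real n))) (Y m) \<omega>\<bar> \<partial>M)))"

end

theory Submission
  imports Defs
begin

(*
  By telescoping, R(k) = \<Sum>_i c_i (X_i(q_i k) - a_i) \<Prod>_{j>i} X_j(q_j k) with c_i = \<Prod>_{j<i} a_j,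
  so the second moment is a double sum over k, k' of expectations of centred products
  E[(X_i(t0) - a_i) \<Prod>_w X_{j_w}(t_w)].  The key estimate (decorrelation) bounds such an
  expectation by a constant times exp(-\<kappa> g / 3), g being the least distance of the t_w from t0:
  every X_j(t) is replaced by its clipped conditional expectation given the window F(t-h, t+h),
  h = g div 3, at L1-cost \<beta>(h), and then the factors before t0 and after t0 are split off by the
  covariance inequality for \<alpha>-mixing.  The least-distance term is dominated by the sum of the
  weights exp(-\<kappa>|t_w - t0|/3).  These weights are summable over k' because each q_j eventually
  increases (C3), and within one product they are summable over k because the q_j separate
  geometrically (C4); hence the double sum over k, k' \<le> n is O(n).
*)

section \<open>The covariance inequality for weakly dependent \<sigma>-algebras\<close>

definition covariance :: "'a measure \<Rightarrow> ('a \<Rightarrow> real) \<Rightarrow> ('a \<Rightarrow> real) \<Rightarrow> real" where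
  "covariance M U V = (\<integral>x. U x * V x \<partial>M) - (\<integral>x. U x \<partial>M) * (\<integral>x. V x \<partial>M)"

lemma abs_mult_bound:
  fixes x y :: real
  assumes "\<bar>x\<bar> \<le> a" "\<bar>y\<bar> \<le> b"
  shows "\<bar>x * y\<bar> \<le> a * b"
  unfolding abs_mult using assms by (intro mult_mono) auto

text \<open>An almost sure bound on a variable bounds its expectation (also when it is not integrable).\<close>
lemma (in prob_space) abs_integral_le_AE_bound:
  fixes f :: "'a \<Rightarrow> real"
  assumes "AE x in M. \<bar>f x\<bar> \<le> c"
  shows "\<bar>\<integral>x. f x \<partial>M\<bar> \<le> c"
proof (cases "integrable M f")
  case True
  have "\<bar>\<integral>x. f x \<partial>M\<bar> \<le> (\<integral>x. \<bar>f x\<bar> \<partial>M)" by (rule integral_abs_bound)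
  also have "\<dots> \<le> c" using assms True by (intro integral_le_const) auto
  finally show ?thesis .
next
  case False
  have "AE x in M. 0 \<le> c" using assms by eventually_elim auto
  then show ?thesis using False by (simp add: not_integrable_integral_eq)
qed

lemma (in prob_space) integrable_bounded:
  fixes f :: "'a \<Rightarrow> real"
  assumes "f \<in> borel_measurable M" "AE x in M. \<bar>f x\<bar> \<le> c"
  shows "integrable M f"
  using assms by (intro integrable_const_bound[where B=c]) auto

lemma abs_integral_mult_le_covariance:
  "\<bar>\<integral>x. U x * V x \<partial>M\<bar> \<le> \<bar>covariance M U V\<bar> + \<bar>\<integral>x. U x \<partial>M\<bar> * \<bar>\<integral>x. V x \<partial>M\<bar>"
  using abs_triangle_ineq[of "covariance M U V" "(\<integral>x. U x \<partial>M) * (\<integral>x. V x \<partial>M)"]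
  unfolding covariance_def by (simp add: abs_mult)

lemma (in prob_space) covariance_affine:
  assumes "integrable M U" "integrable M V" "integrable M (\<lambda>x. U x * V x)"
  shows "covariance M (\<lambda>x. a * U x + b) (\<lambda>x. c * V x + d) = a * c * covariance M U V"
proof -
  have "(\<lambda>x. (a * U x + b) * (c * V x + d))
      = (\<lambda>x. a * c * (U x * V x) + a * d * U x + b * c * V x + b * d)"
    by (simp add: algebra_simps)
  then have EUV: "(\<integral>x. (a * U x + b) * (c * V x + d) \<partial>M)
      = a * c * (\<integral>x. U x * V x \<partial>M) + a * d * (\<integral>x. U x \<partial>M) + b * c * (\<integral>x. V x \<partial>M) + b * d"
    using assms by (simp add: prob_space)
  have EU: "(\<integral>x. a * U x + b \<partial>M) = a * (\<integral>x. U x \<partial>M) + b"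
    and EV: "(\<integral>x. c * V x + d \<partial>M) = c * (\<integral>x. V x \<partial>M) + d"
    using assms by (simp_all add: prob_space)
  show ?thesis
    unfolding covariance_def EUV EU EV by (simp add: algebra_simps)
qed

lemma covariance_cong:
  assumes "\<And>x. x \<in> space M \<Longrightarrow> U x = U' x" "\<And>x. x \<in> space M \<Longrightarrow> V x = V' x"
  shows "covariance M U V = covariance M U' V'"
  unfolding covariance_def using assms by (simp cong: Bochner_Integration.integral_cong)

text \<open>Scaling needs no integrability, since the Bochner integral is homogeneous for all functions.\<close>
lemma covariance_scale:
  "covariance M (\<lambda>x. c * U x) (\<lambda>x. d * V x) = c * d * covariance M U V"
proof -
  have "(\<lambda>x. c * U x * (d * V x)) = (\<lambda>x. (c * d) * (U x * V x))" by (simp add: algebra_simps)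
  then show ?thesis unfolding covariance_def by (simp add: algebra_simps)
qed

lemma (in prob_space) covariance_indicator_sums:
  assumes "finite I" "finite J" "\<And>i. i \<in> I \<Longrightarrow> A i \<in> events" "\<And>j. j \<in> J \<Longrightarrow> B j \<in> events"
  shows "covariance M (\<lambda>x. \<Sum>i\<in>I. indicator (A i) x) (\<lambda>x. \<Sum>j\<in>J. indicator (B j) x)
       = (\<Sum>i\<in>I. \<Sum>j\<in>J. prob (A i \<inter> B j) - prob (A i) * prob (B j))"
proof -
  have ind: "integrable M (indicator E :: 'a \<Rightarrow> real)" if "E \<in> events" for E
    using that by (intro integrable_real_indicator) (auto simp: emeasure_eq_measure)
  have "(\<lambda>x. (\<Sum>i\<in>I. indicator (A i) x) * (\<Sum>j\<in>J. indicator (B j) x))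
      = (\<lambda>x. \<Sum>i\<in>I. \<Sum>j\<in>J. indicator (A i \<inter> B j) x :: real)"
    by (simp add: sum_product indicator_inter_arith)
  then have "(\<integral>x. (\<Sum>i\<in>I. indicator (A i) x) * (\<Sum>j\<in>J. indicator (B j) x) \<partial>M)
      = (\<Sum>i\<in>I. \<Sum>j\<in>J. prob (A i \<inter> B j))"
    using assms by (simp add: ind sets.Int Int_absorb2 sets.sets_into_space)
  moreover have "(\<integral>x. (\<Sum>i\<in>I. indicator (A i) x) \<partial>M) = (\<Sum>i\<in>I. prob (A i))"
    "(\<integral>x. (\<Sum>j\<in>J. indicator (B j) x) \<partial>M) = (\<Sum>j\<in>J. prob (B j))"
    using assms by (simp_all add: ind Int_absorb2 sets.sets_into_space)
  ultimately show ?thesis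
    unfolding covariance_def by (simp add: sum_subtractf sum_product)
qed

text \<open>The staircase approximation of a value in [0,1] from below, on the grid of mesh 1/N,
  written as a sum of indicators so that its covariances reduce to those of events.\<close>
definition staircase :: "nat \<Rightarrow> real \<Rightarrow> real" where
  "staircase N u = (\<Sum>i\<in>{1..N}. indicator {x. real i / real N \<le> x} u) / real N"

lemma staircase_measurable [measurable]: "staircase N \<in> borel_measurable borel"
  unfolding staircase_def by measurable

lemma staircase_eq_floor:
  assumes "0 \<le> u" "u \<le> 1" "N > 0"
  shows "staircase N u = of_int \<lfloor>real N * u\<rfloor> / real N"
proof -
  have "0 \<le> real N * u" "real N * u \<le> real N" using assms by (simp_all add: mult_left_le)
  then have floor_le: "nat \<lfloor>real N * u\<rfloor> \<le> N" and floor_nonneg: "0 \<le> \<lfloor>real N * u\<rfloor>"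
    by linarith+
  have le_iff: "real i / real N \<le> u \<longleftrightarrow> i \<le> nat \<lfloor>real N * u\<rfloor>" for i
    using assms by (simp add: pos_divide_le_eq mult.commute le_nat_iff le_floor_iff)
  have "(\<Sum>i\<in>{1..N}. indicator {x. real i / real N \<le> x} u :: real)
      = real (card {i\<in>{1..N}. i \<le> nat \<lfloor>real N * u\<rfloor>})"
    by (simp add: indicator_def le_iff sum.If_cases Int_def conj_commute)
  also have "{i\<in>{1..N}. i \<le> nat \<lfloor>real N * u\<rfloor>} = {1..nat \<lfloor>real N * u\<rfloor>}"
    using floor_le by auto
  finally show ?thesis
    unfolding staircase_def using floor_nonneg by simp
qed

lemma staircase_bounds:
  assumes "0 \<le> u" "u \<le> 1" "N > 0"
  shows "0 \<le> staircase N u" "staircase N u \<le> 1" "\<bar>u - staircase N u\<bar> \<le> 1 / real N"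
proof -
  have N: "real N > 0" using assms by simp
  have "0 \<le> real N * u" using assms by simp
  then have lo: "real N * u - 1 \<le> of_int \<lfloor>real N * u\<rfloor>" and hi: "of_int \<lfloor>real N * u\<rfloor> \<le> real N * u"
    and nonneg: "0 \<le> \<lfloor>real N * u\<rfloor>"
    by linarith+
  have "u - 1 / real N = (real N * u - 1) / real N" using N by (simp add: field_simps)
  also have "\<dots> \<le> staircase N u"
    unfolding staircase_eq_floor[OF assms] using lo N by (intro divide_right_mono) auto
  finally have "u - 1 / real N \<le> staircase N u" .
  moreover have "staircase N u \<le> u"
    unfolding staircase_eq_floor[OF assms] using hi N by (simp add: divide_le_eq mult.commute)
  moreover show "0 \<le> staircase N u"
    unfolding staircase_eq_floor[OF assms] using nonneg by simp
  ultimately show "staircase N u \<le> 1" "\<bar>u - staircase N u\<bar> \<le> 1 / real N"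
    using assms by auto
qed

lemma (in prob_space) covariance_staircase_le:
  assumes sA: "subalgebra M A" and sB: "subalgebra M B"
    and dep: "\<And>a b. a \<in> sets A \<Longrightarrow> b \<in> sets B \<Longrightarrow> \<bar>prob (a \<inter> b) - prob a * prob b\<bar> \<le> \<alpha>"
    and U: "U \<in> borel_measurable A" and V: "V \<in> borel_measurable B" and N: "N > 0"
  shows "\<bar>covariance M (\<lambda>x. staircase N (U x)) (\<lambda>x. staircase N (V x))\<bar> \<le> \<alpha>"
proof -
  define a where "a i = {x\<in>space M. real i / real N \<le> U x}" for i
  define b where "b i = {x\<in>space M. real i / real N \<le> V x}" for i
  have spaces: "space A = space M" "space B = space M" using sA sB by (auto simp: subalgebra_def)
  have aA: "a i \<in> sets A" for i unfolding a_def spaces(1)[symmetric] using U by measurable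
  have bB: "b i \<in> sets B" for i unfolding b_def spaces(2)[symmetric] using V by measurable
  have events: "a i \<in> events" "b i \<in> events" for i
    using aA bB sA sB by (auto simp: subalgebra_def)
  have "covariance M (\<lambda>x. staircase N (U x)) (\<lambda>x. staircase N (V x))
      = covariance M (\<lambda>x. (1 / real N) * (\<Sum>i\<in>{1..N}. indicator (a i) x))
                     (\<lambda>x. (1 / real N) * (\<Sum>j\<in>{1..N}. indicator (b j) x))"
    by (intro covariance_cong) (simp_all add: staircase_def a_def b_def indicator_def)
  also have "\<dots> = (\<Sum>i\<in>{1..N}. \<Sum>j\<in>{1..N}. prob (a i \<inter> b j) - prob (a i) * prob (b j))
                 / (real N * real N)"
    unfolding covariance_scale using events by (simp add: covariance_indicator_sums)
  also have "\<bar>\<dots>\<bar> \<le> (\<Sum>i\<in>{1..N}. \<Sum>j\<in>{1..N}. \<alpha>) / (real N * real N)"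
  proof -
    have "\<bar>\<Sum>i\<in>{1..N}. \<Sum>j\<in>{1..N}. prob (a i \<inter> b j) - prob (a i) * prob (b j)\<bar>
        \<le> (\<Sum>i\<in>{1..N}. \<Sum>j\<in>{1..N}. \<alpha>)"
      by (intro order.trans[OF sum_abs] sum_mono order.trans[OF sum_abs] dep aA bB)
    then show ?thesis using N by (simp add: abs_divide pos_divide_le_eq mult_ac)
  qed
  also have "\<dots> = \<alpha>" using N by simp
  finally show ?thesis .
qed

lemma (in prob_space) covariance_perturbation:
  assumes meas: "U \<in> borel_measurable M" "V \<in> borel_measurable M"
      "U' \<in> borel_measurable M" "V' \<in> borel_measurable M"
    and bounded: "\<And>x. x \<in> space M \<Longrightarrow> \<bar>U x\<bar> \<le> 1 \<and> \<bar>V x\<bar> \<le> 1 \<and> \<bar>U' x\<bar> \<le> 1 \<and> \<bar>V' x\<bar> \<le> 1"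
    and close: "\<And>x. x \<in> space M \<Longrightarrow> \<bar>U x - U' x\<bar> \<le> \<epsilon> \<and> \<bar>V x - V' x\<bar> \<le> \<epsilon>"
  shows "\<bar>covariance M U V - covariance M U' V'\<bar> \<le> 4 * \<epsilon>"
proof -
  have iU: "integrable M U" and iV: "integrable M V" and iU': "integrable M U'" and iV': "integrable M V'"
    using meas bounded by (auto intro!: integrable_bounded[where c=1] AE_I2)
  have iUV: "integrable M (\<lambda>x. U x * V x)" and iUV': "integrable M (\<lambda>x. U' x * V' x)"
    using meas bounded by (auto intro!: integrable_bounded[where c=1] AE_I2 mult_le_one simp: abs_mult)
  have prod_close: "\<bar>U x * V x - U' x * V' x\<bar> \<le> 2 * \<epsilon>" if "x \<in> space M" for x
  proof -
    have "U x * V x - U' x * V' x = (U x - U' x) * V x + U' x * (V x - V' x)" by (simp add: algebra_simps)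
    also have "\<bar>\<dots>\<bar> \<le> \<epsilon> * 1 + 1 * \<epsilon>"
      using bounded[OF that] close[OF that]
      by (intro order.trans[OF abs_triangle_ineq] add_mono abs_mult_bound) auto
    finally show ?thesis by simp
  qed
  have "\<bar>(\<integral>x. U x * V x \<partial>M) - (\<integral>x. U' x * V' x \<partial>M)\<bar> \<le> 2 * \<epsilon>"
    using prod_close iUV iUV' by (simp add: abs_integral_le_AE_bound flip: Bochner_Integration.integral_diff)
  moreover have "\<bar>(\<integral>x. U x \<partial>M) * (\<integral>x. V x \<partial>M) - (\<integral>x. U' x \<partial>M) * (\<integral>x. V' x \<partial>M)\<bar> \<le> 2 * \<epsilon>"
  proof -
    have dU: "\<bar>(\<integral>x. U x \<partial>M) - (\<integral>x. U' x \<partial>M)\<bar> \<le> \<epsilon>"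
      and dV: "\<bar>(\<integral>x. V x \<partial>M) - (\<integral>x. V' x \<partial>M)\<bar> \<le> \<epsilon>"
      using close iU iU' iV iV' by (simp_all add: abs_integral_le_AE_bound flip: Bochner_Integration.integral_diff)
    have bV: "\<bar>\<integral>x. V x \<partial>M\<bar> \<le> 1" and bU': "\<bar>\<integral>x. U' x \<partial>M\<bar> \<le> 1"
      using bounded by (simp_all add: abs_integral_le_AE_bound)
    have "(\<integral>x. U x \<partial>M) * (\<integral>x. V x \<partial>M) - (\<integral>x. U' x \<partial>M) * (\<integral>x. V' x \<partial>M)
        = ((\<integral>x. U x \<partial>M) - (\<integral>x. U' x \<partial>M)) * (\<integral>x. V x \<partial>M)
          + (\<integral>x. U' x \<partial>M) * ((\<integral>x. V x \<partial>M) - (\<integral>x. V' x \<partial>M))"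
      by (simp add: algebra_simps)
    also have "\<bar>\<dots>\<bar> \<le> \<epsilon> * 1 + 1 * \<epsilon>"
      by (intro order.trans[OF abs_triangle_ineq] add_mono abs_mult_bound dU dV bV bU')
    finally show ?thesis by simp
  qed
  ultimately show ?thesis
    unfolding covariance_def by linarith
qed

lemma (in prob_space) covariance_unit_le:
  assumes sA: "subalgebra M A" and sB: "subalgebra M B"
    and dep: "\<And>a b. a \<in> sets A \<Longrightarrow> b \<in> sets B \<Longrightarrow> \<bar>prob (a \<inter> b) - prob a * prob b\<bar> \<le> \<alpha>"
    and U: "U \<in> borel_measurable A" "\<And>x. x \<in> space M \<Longrightarrow> 0 \<le> U x \<and> U x \<le> 1"
    and V: "V \<in> borel_measurable B" "\<And>x. x \<in> space M \<Longrightarrow> 0 \<le> V x \<and> V x \<le> 1"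
  shows "\<bar>covariance M U V\<bar> \<le> \<alpha>"
proof (rule field_le_epsilon)
  fix e :: real
  assume e: "0 < e"
  obtain N :: nat where N: "4 / e < real N" using reals_Archimedean2 by blast
  moreover have "0 < 4 / e" using e by simp
  ultimately have "0 < real N" by linarith
  then have N_pos: "N > 0" by simp
  have mesh: "4 * (1 / real N) \<le> e"
    using N e N_pos by (simp add: field_simps)
  have UM: "U \<in> borel_measurable M" and VM: "V \<in> borel_measurable M"
    using measurable_from_subalg[OF sA U(1)] measurable_from_subalg[OF sB V(1)] .
  have "\<bar>covariance M U V - covariance M (\<lambda>x. staircase N (U x)) (\<lambda>x. staircase N (V x))\<bar>
      \<le> 4 * (1 / real N)"
    using U(2) V(2) staircase_bounds[OF _ _ N_pos] UM VM
    by (intro covariance_perturbation) auto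
  moreover have "\<bar>covariance M (\<lambda>x. staircase N (U x)) (\<lambda>x. staircase N (V x))\<bar> \<le> \<alpha>"
    by (rule covariance_staircase_le[OF sA sB dep U(1) V(1) N_pos])
  ultimately show "\<bar>covariance M U V\<bar> \<le> \<alpha> + e"
    using mesh by linarith
qed

text \<open>The same inequality for variables bounded by c1 and c2, by an affine change of scale.\<close>
lemma (in prob_space) covariance_bounded_le:
  assumes sA: "subalgebra M A" and sB: "subalgebra M B"
    and dep: "\<And>a b. a \<in> sets A \<Longrightarrow> b \<in> sets B \<Longrightarrow> \<bar>prob (a \<inter> b) - prob a * prob b\<bar> \<le> \<alpha>"
    and U: "U \<in> borel_measurable A" "\<And>x. x \<in> space M \<Longrightarrow> \<bar>U x\<bar> \<le> c1" and c1: "0 < c1"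
    and V: "V \<in> borel_measurable B" "\<And>x. x \<in> space M \<Longrightarrow> \<bar>V x\<bar> \<le> c2" and c2: "0 < c2"
  shows "\<bar>covariance M U V\<bar> \<le> 4 * c1 * c2 * \<alpha>"
proof -
  define U' where "U' x = (U x + c1) / (2 * c1)" for x
  define V' where "V' x = (V x + c2) / (2 * c2)" for x
  have U'A: "U' \<in> borel_measurable A" and V'B: "V' \<in> borel_measurable B"
    unfolding U'_def V'_def using U(1) V(1) by measurable
  have U'M: "U' \<in> borel_measurable M" and V'M: "V' \<in> borel_measurable M"
    using measurable_from_subalg[OF sA U'A] measurable_from_subalg[OF sB V'B] .
  have U'01: "0 \<le> U' x \<and> U' x \<le> 1" and V'01: "0 \<le> V' x \<and> V' x \<le> 1" if "x \<in> space M" for x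
    unfolding U'_def V'_def using U(2)[OF that] V(2)[OF that] c1 c2
    by (auto simp: abs_le_iff field_simps)
  have "integrable M U'" "integrable M V'" "integrable M (\<lambda>x. U' x * V' x)"
    using U'M V'M U'01 V'01
    by (auto intro!: integrable_bounded[where c=1] AE_I2 mult_le_one simp: abs_mult)
  then have "covariance M (\<lambda>x. 2 * c1 * U' x + - c1) (\<lambda>x. 2 * c2 * V' x + - c2)
      = 2 * c1 * (2 * c2) * covariance M U' V'"
    by (rule covariance_affine)
  moreover have "covariance M U V = covariance M (\<lambda>x. 2 * c1 * U' x + - c1) (\<lambda>x. 2 * c2 * V' x + - c2)"
    unfolding U'_def V'_def using c1 c2 by (intro covariance_cong) (simp_all add: field_simps)
  moreover have "\<bar>covariance M U' V'\<bar> \<le> \<alpha>"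
    by (rule covariance_unit_le[OF sA sB dep U'A U'01 V'B V'01])
  ultimately show ?thesis
    using c1 c2 by (simp add: abs_mult)
qed

lemma borel_measurable_prod_list:
  fixes f :: "'b \<Rightarrow> 'a \<Rightarrow> real"
  assumes "\<And>w. w \<in> set ws \<Longrightarrow> f w \<in> borel_measurable N"
  shows "(\<lambda>x. prod_list (map (\<lambda>w. f w x) ws)) \<in> borel_measurable N"
  using assms by (induction ws) auto

lemma abs_prod_list_le:
  fixes f :: "'b \<Rightarrow> real"
  assumes "\<And>w. w \<in> set ws \<Longrightarrow> \<bar>f w\<bar> \<le> c"
  shows "\<bar>prod_list (map f ws)\<bar> \<le> c ^ length ws"
  using assms by (induction ws) (auto simp: abs_mult_bound)

lemma prod_list_diff_le:
  fixes zs :: "(real \<times> real) list"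
  assumes "1 \<le> c" "\<And>z. z \<in> set zs \<Longrightarrow> \<bar>fst z\<bar> \<le> c \<and> \<bar>snd z\<bar> \<le> c"
  shows "\<bar>prod_list (map fst zs) - prod_list (map snd zs)\<bar>
       \<le> c ^ length zs * sum_list (map (\<lambda>z. \<bar>fst z - snd z\<bar>) zs)"
  using assms(2)
proof (induction zs)
  case Nil
  then show ?case by simp
next
  case (Cons z zs)
  let ?P = "prod_list (map fst zs)" and ?Q = "prod_list (map snd zs)"
  let ?S = "sum_list (map (\<lambda>z. \<bar>fst z - snd z\<bar>) zs)"
  have IH: "\<bar>?P - ?Q\<bar> \<le> c ^ length zs * ?S" using Cons by auto
  have z: "\<bar>fst z\<bar> \<le> c" using Cons.prems by auto
  have Q: "\<bar>?Q\<bar> \<le> c ^ length zs" using Cons.prems by (intro abs_prod_list_le) auto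
  have S: "0 \<le> ?S" by (induction zs) auto
  have c_pow: "c ^ length zs \<le> c ^ Suc (length zs)" using assms(1) by simp
  have "fst z * ?P - snd z * ?Q = fst z * (?P - ?Q) + (fst z - snd z) * ?Q" by (simp add: algebra_simps)
  also have "\<bar>\<dots>\<bar> \<le> c * (c ^ length zs * ?S) + \<bar>fst z - snd z\<bar> * c ^ length zs"
    by (intro order.trans[OF abs_triangle_ineq] add_mono abs_mult_bound z IH Q) auto
  also have "\<dots> \<le> c ^ Suc (length zs) * ?S + \<bar>fst z - snd z\<bar> * c ^ Suc (length zs)"
    using c_pow S by (intro add_mono mult_left_mono) auto
  finally show ?case by (simp add: algebra_simps)
qed

lemma prod_list_partition:
  fixes f :: "'b \<Rightarrow> real"
  shows "prod_list (map f xs) = prod_list (map f (filter P xs)) * prod_list (map f (filter (\<lambda>x. \<not> P x) xs))"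
  by (induction xs) (auto simp: algebra_simps)

lemma integral_sum_list:
  fixes f :: "'b \<Rightarrow> 'a \<Rightarrow> real"
  assumes "\<And>w. w \<in> set ws \<Longrightarrow> integrable M (f w)"
  shows "integrable M (\<lambda>x. sum_list (map (\<lambda>w. f w x) ws))"
    "(\<integral>x. sum_list (map (\<lambda>w. f w x) ws) \<partial>M) = sum_list (map (\<lambda>w. \<integral>x. f w x \<partial>M) ws)"
  using assms by (induction ws) auto

definition clip :: "real \<Rightarrow> real \<Rightarrow> real" where
  "clip D x = max (- D) (min D x)"

lemma clip_bound: "0 \<le> D \<Longrightarrow> \<bar>clip D x\<bar> \<le> D"
  unfolding clip_def by auto

lemma clip_closer: "\<bar>y\<bar> \<le> D \<Longrightarrow> \<bar>y - clip D x\<bar> \<le> \<bar>y - x\<bar>"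
  unfolding clip_def by auto

lemma clip_measurable [measurable]: "clip D \<in> borel_measurable borel"
  unfolding clip_def by measurable

lemma exp_minus_mult_nat: "exp (- c * real d) = exp (- c) ^ d"
  by (metis exp_of_nat_mult mult.commute mult_minus_left)

text \<open>Summing x^|k - m| over k is bounded by two geometric series.\<close>
lemma sum_power_abs_diff_le:
  fixes x :: real
  assumes "0 < x" "x < 1" "finite S"
  shows "(\<Sum>k\<in>S. x ^ nat \<bar>int k - int m\<bar>) \<le> 2 / (1 - x)"
proof -
  define S1 where "S1 = {k\<in>S. k \<le> m}"
  define S2 where "S2 = {k\<in>S. m < k}"
  have fin: "finite S1" "finite S2" unfolding S1_def S2_def using assms by auto
  have "S = S1 \<union> S2" "S1 \<inter> S2 = {}" unfolding S1_def S2_def by auto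
  then have "(\<Sum>k\<in>S. x ^ nat \<bar>int k - int m\<bar>)
      = (\<Sum>k\<in>S1. x ^ nat \<bar>int k - int m\<bar>) + (\<Sum>k\<in>S2. x ^ nat \<bar>int k - int m\<bar>)"
    using fin by (simp add: sum.union_disjoint)
  also have "(\<Sum>k\<in>S1. x ^ nat \<bar>int k - int m\<bar>) = (\<Sum>d\<in>(\<lambda>k. m - k) ` S1. x ^ d)"
    by (subst sum.reindex) (auto simp: inj_on_def S1_def nat_diff_distrib intro!: sum.cong)
  also have "\<dots> \<le> 1 / (1 - x)" using assms fin by (intro less_imp_le[OF geometric_sum_less]) auto
  also have "(\<Sum>k\<in>S2. x ^ nat \<bar>int k - int m\<bar>) = (\<Sum>d\<in>(\<lambda>k. k - m) ` S2. x ^ d)"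
    by (subst sum.reindex) (auto simp: inj_on_def S2_def nat_diff_distrib intro!: sum.cong)
  also have "\<dots> \<le> 1 / (1 - x)" using assms fin by (intro less_imp_le[OF geometric_sum_less]) auto
  finally show ?thesis by simp
qed

lemma eventually_increasing_gap:
  fixes f :: "nat \<Rightarrow> real"
  assumes inc: "\<And>k. K \<le> k \<Longrightarrow> f k + 1 \<le> f (Suc k)" and "K \<le> k1" "k1 \<le> k2"
  shows "f k1 + real (k2 - k1) \<le> f k2"
  using assms(3)
proof (induction k2 rule: dec_induct)
  case base
  then show ?case by simp
next
  case (step k)
  then show ?case using inc[of k] assms(2) by (simp add: of_nat_diff)
qed

lemma sum_le_threshold_plus_tail:
  fixes f :: "nat \<Rightarrow> real"
  assumes "\<And>k. f k \<le> 1"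
  shows "(\<Sum>k=0..n. f k) \<le> real K + (\<Sum>k\<in>{k\<in>{0..n}. K \<le> k}. f k)"
proof -
  have split: "{0..n} = {k\<in>{0..n}. K \<le> k} \<union> {k\<in>{0..n}. k < K}" by auto
  have "(\<Sum>k=0..n. f k) = (\<Sum>k\<in>{k\<in>{0..n}. K \<le> k}. f k) + (\<Sum>k\<in>{k\<in>{0..n}. k < K}. f k)"
    by (subst split, rule sum.union_disjoint) auto
  also have "(\<Sum>k\<in>{k\<in>{0..n}. k < K}. f k) \<le> real (card {k\<in>{0..n}. k < K})"
    using assms sum_mono[of "{k\<in>{0..n}. k < K}" f "\<lambda>_. 1"] by simp
  also have "card {k\<in>{0..n}. k < K} \<le> K"
    using card_mono[of "{..<K}" "{k\<in>{0..n}. k < K}"] by auto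
  finally show ?thesis by simp
qed

lemma sum_exp_dist_increasing_le:
  fixes f :: "nat \<Rightarrow> real"
  assumes c: "c > 0" and inc: "\<And>k. K \<le> k \<Longrightarrow> f k + 1 \<le> f (Suc k)"
  shows "(\<Sum>k=0..n. exp (- c * \<bar>f k - t\<bar>)) \<le> real K + 2 / (1 - exp (- c / 2))"
proof -
  define S where "S = {k\<in>{0..n}. K \<le> k}"
  have "(\<Sum>k\<in>S. exp (- c * \<bar>f k - t\<bar>)) \<le> 2 / (1 - exp (- c / 2))"
  proof (cases "S = {}")
    case True
    then show ?thesis using c by simp
  next
    case False
    have fin: "finite S" unfolding S_def by simp
    obtain k0 where k0: "k0 \<in> S" and k0_min: "\<And>k. k \<in> S \<Longrightarrow> \<bar>f k0 - t\<bar> \<le> \<bar>f k - t\<bar>"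
      using arg_min_if_finite[OF fin False, of "\<lambda>k. \<bar>f k - t\<bar>"] by (metis not_less)
    have "exp (- c * \<bar>f k - t\<bar>) \<le> exp (- c / 2) ^ nat \<bar>int k - int k0\<bar>" if k: "k \<in> S" for k
    proof -
      have "real (nat \<bar>int k - int k0\<bar>) \<le> \<bar>f k - f k0\<bar>"
        using eventually_increasing_gap[of K f k0 k, OF inc] eventually_increasing_gap[of K f k k0, OF inc]
          k k0 unfolding S_def by (cases "k0 \<le> k") (auto simp: of_nat_diff)
      also have "\<dots> \<le> 2 * \<bar>f k - t\<bar>" using k0_min[OF k] by (auto simp: abs_le_iff abs_if split: if_splits)
      finally have "(c / 2) * real (nat \<bar>int k - int k0\<bar>) \<le> c * \<bar>f k - t\<bar>"
        using c by (simp add: field_simps)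
      then have "exp (- c * \<bar>f k - t\<bar>) \<le> exp (- (c / 2) * real (nat \<bar>int k - int k0\<bar>))"
        by simp
      also have "\<dots> = exp (- (c / 2)) ^ nat \<bar>int k - int k0\<bar>" by (rule exp_minus_mult_nat)
      finally show ?thesis by simp
    qed
    then have "(\<Sum>k\<in>S. exp (- c * \<bar>f k - t\<bar>)) \<le> (\<Sum>k\<in>S. exp (- c / 2) ^ nat \<bar>int k - int k0\<bar>)"
      by (intro sum_mono)
    also have "\<dots> \<le> 2 / (1 - exp (- c / 2))" using c fin by (intro sum_power_abs_diff_le) auto
    finally show ?thesis .
  qed
  then show ?thesis
    using sum_le_threshold_plus_tail[of "\<lambda>k. exp (- c * \<bar>f k - t\<bar>)" n K] c unfolding S_def
    by (simp add: mult_nonneg_nonneg)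
qed

lemma sum_exp_linear_gap_le:
  fixes d :: "nat \<Rightarrow> real"
  assumes c: "c > 0" and nonneg: "\<And>k. 0 \<le> d k" and gap: "\<And>k. K \<le> k \<Longrightarrow> real k \<le> d k"
  shows "(\<Sum>k=0..n. exp (- c * d k)) \<le> real K + 1 / (1 - exp (- c))"
proof -
  define S where "S = {k\<in>{0..n}. K \<le> k}"
  have "(\<Sum>k\<in>S. exp (- c * d k)) \<le> (\<Sum>k\<in>S. exp (- c) ^ k)"
  proof (intro sum_mono)
    fix k assume "k \<in> S"
    then have "- c * d k \<le> - c * real k" using gap c unfolding S_def by simp
    then show "exp (- c * d k) \<le> exp (- c) ^ k" by (simp add: exp_minus_mult_nat[symmetric])
  qed
  also have "\<dots> \<le> 1 / (1 - exp (- c))"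
    using c unfolding S_def by (intro less_imp_le[OF geometric_sum_less]) auto
  finally show ?thesis
    using sum_le_threshold_plus_tail[of "\<lambda>k. exp (- c * d k)" n K] c nonneg unfolding S_def
    by (simp add: mult_nonneg_nonneg)
qed

lemma prod_diff_telescope:
  fixes y c :: "nat \<Rightarrow> real"
  shows "(\<Prod>j\<in>{1..l}. y j) - (\<Prod>j\<in>{1..l}. c j)
       = (\<Sum>i\<in>{1..l}. (\<Prod>j\<in>{1..<i}. c j) * (y i - c i) * (\<Prod>j\<in>{i<..l}. y j))"
proof -
  define T where "T i = (\<Prod>j\<in>{1..<i}. c j) * (\<Prod>j\<in>{i..l}. y j)" for i
  have step: "T i - T (Suc i) = (\<Prod>j\<in>{1..<i}. c j) * (y i - c i) * (\<Prod>j\<in>{i<..l}. y j)"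
    if "i \<in> {1..l}" for i
  proof -
    have "(\<Prod>j\<in>{1..<Suc i}. c j) = (\<Prod>j\<in>{1..<i}. c j) * c i"
      using that by (simp add: prod.atLeastLessThan_Suc)
    moreover have "{i..l} = insert i {i<..l}" using that by auto
    then have "(\<Prod>j\<in>{i..l}. y j) = y i * (\<Prod>j\<in>{i<..l}. y j)" by simp
    moreover have "{Suc i..l} = {i<..l}" by auto
    ultimately show ?thesis unfolding T_def by (simp add: algebra_simps)
  qed
  have "(\<Sum>i\<in>{1..l}. (\<Prod>j\<in>{1..<i}. c j) * (y i - c i) * (\<Prod>j\<in>{i<..l}. y j))
      = (\<Sum>i\<in>{1..<Suc l}. T i - T (Suc i))"
    using step by (intro sum.cong) auto
  also have "\<dots> = - (\<Sum>i\<in>{1..<Suc l}. T (Suc i) - T i)" by (simp add: sum_negf[symmetric])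
  also have "\<dots> = T 1 - T (Suc l)"
    by (cases "l = 0") (simp_all add: sum_Suc_diff')
  also have "T 1 = (\<Prod>j\<in>{1..l}. y j)" unfolding T_def by simp
  also have "T (Suc l) = (\<Prod>j\<in>{1..l}. c j)" unfolding T_def by (simp add: atLeastLessThanSuc_atLeastAtMost)
  finally show ?thesis by simp
qed

section \<open>The standing hypotheses and the main estimate\<close>

locale nonconventional_setup =
  fixes M :: "'a measure" and l :: nat and X :: "nat \<Rightarrow> nat \<Rightarrow> 'a \<Rightarrow> real" and D :: real
    and F :: "ereal \<Rightarrow> ereal \<Rightarrow> 'a measure" and q :: "nat \<Rightarrow> nat \<Rightarrow> nat"
    and \<kappa> :: real and r p :: nat and \<gamma> n0 :: real
  assumes M_prob: "prob_space M" and l_pos: "l \<ge> 1"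
    and X_meas: "\<forall>j\<in>{1..l}. \<forall>n. X j n \<in> borel_measurable M"
    and X_stationary: "\<forall>j\<in>{1..l}. stationary M (X j)"
    and X_bounded: "\<forall>j\<in>{1..l}. \<forall>n. AE \<omega> in M. \<bar>X j n \<omega>\<bar> \<le> D"
    and F_sub: "\<forall>k\<in>ZInf. \<forall>k'\<in>ZInf. subalgebra M (F k k')"
    and F_mono: "\<forall>k\<in>ZInf. \<forall>k'\<in>ZInf. \<forall>m\<in>ZInf. \<forall>m'\<in>ZInf.
           m' \<le> k \<and> k' \<le> m \<longrightarrow> sets (F k k') \<subseteq> sets (F m' m)"
    and \<kappa>_pos: "\<kappa> > 0"
    and mixing_rate: "\<forall>n. mixing_alpha M F n + Max ((\<lambda>j. approx_beta M F (X j) n) ` {1..l})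
              \<le> exp (- \<kappa> * real n) / \<kappa>"
    and r_pos: "r > 0" and q1_linear: "\<forall>n. q 1 n = r * n + p"
    and \<gamma>_pos: "0 < \<gamma>" and \<gamma>_lt1: "\<gamma> < 1" and n0_gt1: "n0 > 1"
    and q_growth: "\<forall>n. real n \<ge> n0 \<longrightarrow> (\<forall>j\<in>{2..l}. real (q j (n + 1)) \<ge> real (q j n) + real n powr \<gamma>)"
    and q_separation: "\<forall>n. real n \<ge> n0 \<longrightarrow> (\<forall>j\<in>{1..l-1}.
           real (q (j + 1) (nat \<lfloor>real n powr (1 - \<gamma>)\<rfloor>)) \<ge> real (q j n) * real n powr \<gamma>)"

sublocale nonconventional_setup \<subseteq> prob_space M
  by (rule M_prob)

context nonconventional_setup
begin

lemma D_nonneg: "0 \<le> D"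
proof -
  have "AE \<omega> in M. \<bar>X 1 0 \<omega>\<bar> \<le> D" using X_bounded l_pos by auto
  then have "AE \<omega> in M. 0 \<le> D" by eventually_elim auto
  then show ?thesis by simp
qed

lemma X_integrable: "j \<in> {1..l} \<Longrightarrow> integrable M (X j t)"
  using X_meas X_bounded by (intro integrable_bounded[where c=D]) auto

text \<open>Stationarity is only needed through the constancy of the means.\<close>
lemma X_mean_stationary:
  assumes j: "j \<in> {1..l}"
  shows "(\<integral>\<omega>. X j t \<omega> \<partial>M) = (\<integral>\<omega>. X j 0 \<omega> \<partial>M)"
proof -
  let ?P = "\<Pi>\<^sub>M i\<in>(UNIV::nat set). (borel::real measure)"
  have meas: "\<And>n. X j n \<in> borel_measurable M" using X_meas j by auto
  have shifted: "(\<lambda>\<omega> i. X j (i + t) \<omega>) \<in> measurable M ?P"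
    and unshifted: "(\<lambda>\<omega> i. X j i \<omega>) \<in> measurable M ?P"
    by (auto intro!: measurable_PiM_single' simp: meas)
  have coord: "(\<lambda>f. f 0) \<in> borel_measurable ?P" by (rule measurable_component_singleton) auto
  have "distr M ?P (\<lambda>\<omega> i. X j (i + t) \<omega>) = distr M ?P (\<lambda>\<omega> i. X j i \<omega>)"
    using X_stationary j unfolding stationary_def by blast
  then have "(\<integral>f. f 0 \<partial>distr M ?P (\<lambda>\<omega> i. X j (i + t) \<omega>)) = (\<integral>f. f 0 \<partial>distr M ?P (\<lambda>\<omega> i. X j i \<omega>))"
    by simp
  then show ?thesis
    by (simp add: integral_distr[OF shifted coord] integral_distr[OF unshifted coord])
qed

lemma ZInf_int: "ereal (real_of_int z) \<in> ZInf" unfolding ZInf_def by auto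
lemma ZInf_nat: "ereal (real k) \<in> ZInf" using ZInf_int[of "int k"] by simp
lemma ZInf_add: "ereal (real k + real n) \<in> ZInf" using ZInf_int[of "int k + int n"] by simp
lemma ZInf_diff: "ereal (real k - real n) \<in> ZInf" using ZInf_int[of "int k - int n"] by simp
lemma ZInf_infinity: "\<infinity> \<in> ZInf" "-\<infinity> \<in> ZInf" unfolding ZInf_def by auto

lemma F_subalgebra_F:
  assumes "k \<in> ZInf" "k' \<in> ZInf" "m \<in> ZInf" "m' \<in> ZInf" "m' \<le> k" "k' \<le> m"
  shows "subalgebra (F m' m) (F k k')"
proof -
  have "sets (F k k') \<subseteq> sets (F m' m)" using F_mono assms by blast
  moreover have "space (F k k') = space (F m' m)" using F_sub assms by (auto simp: subalgebra_def)
  ultimately show ?thesis by (simp add: subalgebra_def)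
qed

subsection \<open>Mixing and approximation\<close>

text \<open>The dependence coefficient is a supremum of a bounded set, so it dominates its elements.\<close>
lemma mixing_alpha_upper:
  assumes "A \<in> sets (F (-\<infinity>) (ereal (real k)))" "B \<in> sets (F (ereal (real k + real n)) \<infinity>)"
  shows "\<bar>prob (A \<inter> B) - prob A * prob B\<bar> \<le> mixing_alpha M F n"
proof -
  let ?S = "{\<bar>prob (A \<inter> B) - prob A * prob B\<bar> | k A B.
       A \<in> sets (F (-\<infinity>) (ereal (real (k::nat)))) \<and> B \<in> sets (F (ereal (real k + real n)) \<infinity>)}"
  have "x \<le> 2" if "x \<in> ?S" for x
  proof -
    obtain A' B' where x: "x = \<bar>prob (A' \<inter> B') - prob A' * prob B'\<bar>" using \<open>x \<in> ?S\<close> by blast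
    have "\<bar>prob A' * prob B'\<bar> \<le> 1 * 1" by (intro abs_mult_bound) auto
    moreover have "\<bar>prob (A' \<inter> B')\<bar> \<le> 1" by simp
    ultimately show "x \<le> 2" unfolding x by linarith
  qed
  then have "bdd_above ?S" by (intro bdd_aboveI[where M=2])
  moreover have "\<bar>prob (A \<inter> B) - prob A * prob B\<bar> \<in> ?S" using assms by blast
  ultimately show ?thesis unfolding mixing_alpha_def by (intro cSup_upper)
qed

text \<open>Likewise for the approximation coefficient; its elements are bounded by 2D.\<close>
lemma approx_beta_upper:
  assumes j: "j \<in> {1..l}"
  shows "(\<integral>\<omega>. \<bar>X j t \<omega> - real_cond_exp M (F (ereal (real t - real n)) (ereal (real t + real n))) (X j t) \<omega>\<bar> \<partial>M)
      \<le> approx_beta M F (X j) n"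
proof -
  let ?W = "\<lambda>m. F (ereal (real m - real n)) (ereal (real m + real n))"
  let ?f = "\<lambda>m. (\<integral>\<omega>. \<bar>X j m \<omega> - real_cond_exp M (?W m) (X j m) \<omega>\<bar> \<partial>M)"
  have "?f m \<le> 2 * D" for m
  proof -
    have "finite_measure_subalgebra M (?W m)"
      using F_sub ZInf_diff ZInf_add by unfold_locales blast
    then interpret sigma_finite_subalgebra M "?W m"
      by (rule finite_measure_subalgebra_is_sigma_finite)
    have b: "AE \<omega> in M. \<bar>X j m \<omega>\<bar> \<le> D" using X_bounded j by auto
    have "AE \<omega> in M. real_cond_exp M (?W m) (X j m) \<omega> \<le> D"
      using b by (intro real_cond_exp_le_c X_integrable[OF j]) (auto elim: eventually_mono)
    moreover have "AE \<omega> in M. real_cond_exp M (?W m) (X j m) \<omega> \<ge> - D"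
      using b by (intro real_cond_exp_ge_c X_integrable[OF j]) (auto elim: eventually_mono)
    ultimately have "AE \<omega> in M. \<bar>\<bar>X j m \<omega> - real_cond_exp M (?W m) (X j m) \<omega>\<bar>\<bar> \<le> 2 * D"
      using b by eventually_elim auto
    then show ?thesis using abs_integral_le_AE_bound by fastforce
  qed
  then have "bdd_above (range ?f)" by (intro bdd_aboveI[where M="2 * D"]) auto
  then show ?thesis unfolding approx_beta_def by (intro cSup_upper) auto
qed

lemma mixing_coefficients_le:
  assumes j: "j \<in> {1..l}"
  shows "mixing_alpha M F n \<le> exp (- \<kappa> * real n) / \<kappa>"
    and "approx_beta M F (X j) n \<le> exp (- \<kappa> * real n) / \<kappa>"
proof -
  have "{} \<in> sets (F (-\<infinity>) (ereal (real 0)))" "{} \<in> sets (F (ereal (real 0 + real n)) \<infinity>)"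
    by simp_all
  from mixing_alpha_upper[OF this] have \<alpha>: "0 \<le> mixing_alpha M F n" by simp
  have "0 \<le> approx_beta M F (X j) n"
    by (intro order.trans[OF _ approx_beta_upper[OF j, of 0 n]] integral_nonneg_AE) auto
  moreover have "approx_beta M F (X j) n \<le> Max ((\<lambda>j. approx_beta M F (X j) n) ` {1..l})"
    using j by (intro Max_ge) auto
  moreover have "mixing_alpha M F n + Max ((\<lambda>j. approx_beta M F (X j) n) ` {1..l})
      \<le> exp (- \<kappa> * real n) / \<kappa>"
    using mixing_rate by blast
  ultimately show "mixing_alpha M F n \<le> exp (- \<kappa> * real n) / \<kappa>"
    and "approx_beta M F (X j) n \<le> exp (- \<kappa> * real n) / \<kappa>"
    using \<alpha> by linarith+
qed

lemma covariance_past_future_le: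
  assumes "U \<in> borel_measurable (F (-\<infinity>) (ereal (real k)))" "\<And>\<omega>. \<bar>U \<omega>\<bar> \<le> c1" "0 < c1"
    and "V \<in> borel_measurable (F (ereal (real k + real n)) \<infinity>)" "\<And>\<omega>. \<bar>V \<omega>\<bar> \<le> c2" "0 < c2"
  shows "\<bar>covariance M U V\<bar> \<le> 4 * c1 * c2 * (exp (- \<kappa> * real n) / \<kappa>)"
proof (rule covariance_bounded_le)
  show "subalgebra M (F (-\<infinity>) (ereal (real k)))" "subalgebra M (F (ereal (real k + real n)) \<infinity>)"
    using F_sub ZInf_infinity ZInf_nat ZInf_add by blast+
  show "\<bar>prob (a \<inter> b) - prob a * prob b\<bar> \<le> exp (- \<kappa> * real n) / \<kappa>"
    if "a \<in> sets (F (-\<infinity>) (ereal (real k)))" "b \<in> sets (F (ereal (real k + real n)) \<infinity>)" for a b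
    by (rule order.trans[OF mixing_alpha_upper[OF that] mixing_coefficients_le(1)]) (use l_pos in auto)
qed (use assms in auto)

definition window :: "nat \<Rightarrow> nat \<Rightarrow> 'a measure" where
  "window t h = F (ereal (real t - real h)) (ereal (real t + real h))"

text \<open>The clipped conditional expectation of X j t given the window of radius h around t:
  a variable bounded by D and determined by that window, which by (C1) is L1-close to X j t.\<close>
definition Xh :: "nat \<Rightarrow> nat \<Rightarrow> nat \<Rightarrow> 'a \<Rightarrow> real" where
  "Xh j t h = (\<lambda>\<omega>. clip D (real_cond_exp M (window t h) (X j t) \<omega>))"

lemma window_subalgebra: "subalgebra M (window t h)"
  unfolding window_def using F_sub ZInf_diff ZInf_add by blast

lemma Xh_measurable_window: "Xh j t h \<in> borel_measurable (window t h)"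
  unfolding Xh_def by measurable

lemma Xh_measurable: "Xh j t h \<in> borel_measurable M"
  using measurable_from_subalg[OF window_subalgebra Xh_measurable_window] .

lemma Xh_bound: "\<bar>Xh j t h \<omega>\<bar> \<le> D"
  unfolding Xh_def using D_nonneg by (rule clip_bound)

lemma Xh_measurable_past:
  assumes "ereal x \<in> ZInf" "real t + real h \<le> x"
  shows "Xh j t h \<in> borel_measurable (F (-\<infinity>) (ereal x))"
proof -
  have "subalgebra (F (-\<infinity>) (ereal x)) (window t h)" unfolding window_def
    using assms by (intro F_subalgebra_F) (auto simp: ZInf_diff ZInf_add ZInf_infinity)
  from measurable_from_subalg[OF this Xh_measurable_window] show ?thesis .
qed

lemma Xh_measurable_future:
  assumes "ereal x \<in> ZInf" "x \<le> real t - real h"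
  shows "Xh j t h \<in> borel_measurable (F (ereal x) \<infinity>)"
proof -
  have "subalgebra (F (ereal x) \<infinity>) (window t h)" unfolding window_def
    using assms by (intro F_subalgebra_F) (auto simp: ZInf_diff ZInf_add ZInf_infinity)
  from measurable_from_subalg[OF this Xh_measurable_window] show ?thesis .
qed

lemma Xh_error:
  assumes j: "j \<in> {1..l}"
  shows "integrable M (\<lambda>\<omega>. \<bar>X j t \<omega> - Xh j t h \<omega>\<bar>)"
    and "(\<integral>\<omega>. \<bar>X j t \<omega> - Xh j t h \<omega>\<bar> \<partial>M) \<le> exp (- \<kappa> * real h) / \<kappa>"
proof -
  interpret sigma_finite_subalgebra M "window t h"
    using window_subalgebra by (intro finite_measure_subalgebra_is_sigma_finite) unfold_locales
  have X: "X j t \<in> borel_measurable M" using X_meas j by auto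
  have b: "AE \<omega> in M. \<bar>X j t \<omega>\<bar> \<le> D" using X_bounded j by auto
  have "AE \<omega> in M. \<bar>\<bar>X j t \<omega> - Xh j t h \<omega>\<bar>\<bar> \<le> 2 * D"
  proof (rule eventually_mono[OF b])
    fix \<omega> show "\<bar>X j t \<omega>\<bar> \<le> D \<Longrightarrow> \<bar>\<bar>X j t \<omega> - Xh j t h \<omega>\<bar>\<bar> \<le> 2 * D"
      using Xh_bound[of j t h \<omega>] by linarith
  qed
  then show int: "integrable M (\<lambda>\<omega>. \<bar>X j t \<omega> - Xh j t h \<omega>\<bar>)"
    using X Xh_measurable by (intro integrable_bounded) auto
  have "(\<integral>\<omega>. \<bar>X j t \<omega> - Xh j t h \<omega>\<bar> \<partial>M)
      \<le> (\<integral>\<omega>. \<bar>X j t \<omega> - real_cond_exp M (window t h) (X j t) \<omega>\<bar> \<partial>M)"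
  proof (rule integral_mono_AE[OF int])
    show "integrable M (\<lambda>\<omega>. \<bar>X j t \<omega> - real_cond_exp M (window t h) (X j t) \<omega>\<bar>)"
      using real_cond_exp_int(1)[OF X_integrable[OF j]] X_integrable[OF j] by auto
    show "AE \<omega> in M. \<bar>X j t \<omega> - Xh j t h \<omega>\<bar> \<le> \<bar>X j t \<omega> - real_cond_exp M (window t h) (X j t) \<omega>\<bar>"
      using b unfolding Xh_def by (auto elim!: eventually_mono intro: clip_closer)
  qed
  also have "\<dots> \<le> approx_beta M F (X j) h"
    using approx_beta_upper[OF j] unfolding window_def .
  also have "\<dots> \<le> exp (- \<kappa> * real h) / \<kappa>" by (rule mixing_coefficients_le(2)[OF j])
  finally show "(\<integral>\<omega>. \<bar>X j t \<omega> - Xh j t h \<omega>\<bar> \<partial>M) \<le> exp (- \<kappa> * real h) / \<kappa>" .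
qed

subsection \<open>Decorrelation of centred products\<close>

definition mean :: "nat \<Rightarrow> real" where
  "mean j = (\<integral>\<omega>. X j 0 \<omega> \<partial>M)"

text \<open>Products of the process, and of its approximations, over a list of (component, time) pairs.\<close>
definition prod_X :: "(nat \<times> nat) list \<Rightarrow> 'a \<Rightarrow> real" where
  "prod_X ws \<omega> = prod_list (map (\<lambda>w. X (fst w) (snd w) \<omega>) ws)"

definition prod_Xh :: "nat \<Rightarrow> (nat \<times> nat) list \<Rightarrow> 'a \<Rightarrow> real" where
  "prod_Xh h ws \<omega> = prod_list (map (\<lambda>w. Xh (fst w) (snd w) h \<omega>) ws)"

text \<open>A bound for all variables and means that is at least one, so that its powers are monotone.\<close>
definition D1 :: real where
  "D1 = D + 1"

lemma D1_ge_1: "1 \<le> D1"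
  using D_nonneg unfolding D1_def by simp

lemma D_le_D1: "D \<le> D1"
  unfolding D1_def by simp

lemma D1_power_double: "D1 ^ (2 * m + 1) = D1 ^ m * D1 ^ m * D1"
  by (simp add: mult_2 power_add)

lemma mean_bound: "j \<in> {1..l} \<Longrightarrow> \<bar>mean j\<bar> \<le> D"
  unfolding mean_def using X_bounded by (intro abs_integral_le_AE_bound) auto

lemma prod_Xh_bound: "length ws \<le> m \<Longrightarrow> \<bar>prod_Xh h ws \<omega>\<bar> \<le> D1 ^ m"
proof -
  assume len: "length ws \<le> m"
  have "\<bar>prod_Xh h ws \<omega>\<bar> \<le> D1 ^ length ws"
    unfolding prod_Xh_def using Xh_bound D_le_D1 by (intro abs_prod_list_le) (meson order.trans)
  also have "\<dots> \<le> D1 ^ m" using len D1_ge_1 by (intro power_increasing)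
  finally show ?thesis .
qed

lemma prod_Xh_measurable_past:
  assumes "ereal x \<in> ZInf" "\<forall>w\<in>set ws. real (snd w) + real h \<le> x"
  shows "prod_Xh h ws \<in> borel_measurable (F (-\<infinity>) (ereal x))"
  unfolding prod_Xh_def using assms by (intro borel_measurable_prod_list Xh_measurable_past) auto

lemma prod_Xh_measurable_future:
  assumes "ereal x \<in> ZInf" "\<forall>w\<in>set ws. x \<le> real (snd w) - real h"
  shows "prod_Xh h ws \<in> borel_measurable (F (ereal x) \<infinity>)"
  unfolding prod_Xh_def using assms by (intro borel_measurable_prod_list Xh_measurable_future) auto

lemma prod_Xh_measurable: "prod_Xh h ws \<in> borel_measurable M"
  unfolding prod_Xh_def by (intro borel_measurable_prod_list Xh_measurable)

lemma prod_X_measurable: "\<forall>w\<in>set ws. fst w \<in> {1..l} \<Longrightarrow> prod_X ws \<in> borel_measurable M"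
  unfolding prod_X_def using X_meas by (intro borel_measurable_prod_list) auto

lemma X_list_bounded:
  "\<forall>w\<in>set ws. fst w \<in> {1..l} \<Longrightarrow> AE \<omega> in M. \<forall>w\<in>set ws. \<bar>X (fst w) (snd w) \<omega>\<bar> \<le> D"
  using X_bounded by (intro eventually_ball_finite) auto

lemma centred_product_bound:
  assumes j0: "j0 \<in> {1..l}" and ws: "\<forall>w\<in>set ws. fst w \<in> {1..l}"
  shows "AE \<omega> in M. \<bar>(X j0 t0 \<omega> - mean j0) * prod_X ws \<omega>\<bar> \<le> 2 * D1 * D1 ^ length ws"
proof -
  have "AE \<omega> in M. \<bar>X j0 t0 \<omega>\<bar> \<le> D" using X_bounded j0 by auto
  then show ?thesis using X_list_bounded[OF ws]
  proof eventually_elim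
    fix \<omega> assume X0: "\<bar>X j0 t0 \<omega>\<bar> \<le> D" and Xws: "\<forall>w\<in>set ws. \<bar>X (fst w) (snd w) \<omega>\<bar> \<le> D"
    have "\<bar>X j0 t0 \<omega> - mean j0\<bar> \<le> 2 * D1" using X0 mean_bound[OF j0] D_le_D1 by linarith
    moreover have "\<bar>prod_X ws \<omega>\<bar> \<le> D1 ^ length ws"
      unfolding prod_X_def by (intro abs_prod_list_le) (use Xws D_le_D1 in force)
    ultimately show "\<bar>(X j0 t0 \<omega> - mean j0) * prod_X ws \<omega>\<bar> \<le> 2 * D1 * D1 ^ length ws"
      by (rule abs_mult_bound)
  qed
qed

lemma centred_product_integrable:
  assumes j0: "j0 \<in> {1..l}" and ws: "\<forall>w\<in>set ws. fst w \<in> {1..l}"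
  shows "integrable M (\<lambda>\<omega>. (X j0 t0 \<omega> - mean j0) * prod_X ws \<omega>)"
proof (rule integrable_bounded[OF _ centred_product_bound[OF j0 ws]])
  show "(\<lambda>\<omega>. (X j0 t0 \<omega> - mean j0) * prod_X ws \<omega>) \<in> borel_measurable M"
  proof -
    have "X j0 t0 \<in> borel_measurable M" using X_meas j0 by auto
    then show ?thesis using prod_X_measurable[OF ws] by measurable
  qed
qed

lemma centred_approx_integrable: "j0 \<in> {1..l} \<Longrightarrow> integrable M (\<lambda>\<omega>. (Xh j0 t0 h \<omega> - mean j0) * prod_Xh h ws \<omega>)"
proof (rule integrable_bounded)
  assume j0: "j0 \<in> {1..l}"
  show "AE \<omega> in M. \<bar>(Xh j0 t0 h \<omega> - mean j0) * prod_Xh h ws \<omega>\<bar> \<le> 2 * D * D1 ^ length ws"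
  proof (intro AE_I2 abs_mult_bound)
    fix \<omega> show "\<bar>Xh j0 t0 h \<omega> - mean j0\<bar> \<le> 2 * D"
      using Xh_bound[of j0 t0 h \<omega>] mean_bound[OF j0] by linarith
  qed (rule prod_Xh_bound, simp)
qed (use Xh_measurable prod_Xh_measurable in measurable)

definition total_error :: "nat \<Rightarrow> nat \<Rightarrow> nat \<Rightarrow> (nat \<times> nat) list \<Rightarrow> 'a \<Rightarrow> real" where
  "total_error j0 t0 h ws \<omega> = \<bar>X j0 t0 \<omega> - Xh j0 t0 h \<omega>\<bar>
    + sum_list (map (\<lambda>w. \<bar>X (fst w) (snd w) \<omega> - Xh (fst w) (snd w) h \<omega>\<bar>) ws)"

lemma total_error_integral:
  assumes j0: "j0 \<in> {1..l}" and ws: "\<forall>w\<in>set ws. fst w \<in> {1..l}"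
  shows "integrable M (total_error j0 t0 h ws)"
    and "(\<integral>\<omega>. total_error j0 t0 h ws \<omega> \<partial>M) \<le> real (Suc (length ws)) * (exp (- \<kappa> * real h) / \<kappa>)"
proof -
  define e where "e = exp (- \<kappa> * real h) / \<kappa>"
  let ?err = "\<lambda>w \<omega>. \<bar>X (fst w) (snd w) \<omega> - Xh (fst w) (snd w) h \<omega>\<bar>"
  have "integrable M (?err w)" if "w \<in> set ws" for w
    using Xh_error(1) ws that by auto
  note errs = integral_sum_list[where f="?err", OF this]
  show "integrable M (total_error j0 t0 h ws)"
    unfolding total_error_def using Xh_error(1)[OF j0] errs(1) by auto
  have "(\<integral>\<omega>. total_error j0 t0 h ws \<omega> \<partial>M) = (\<integral>\<omega>. \<bar>X j0 t0 \<omega> - Xh j0 t0 h \<omega>\<bar> \<partial>M)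
     + sum_list (map (\<lambda>w. \<integral>\<omega>. ?err w \<omega> \<partial>M) ws)"
    unfolding total_error_def using Xh_error(1)[OF j0] errs by simp
  also have "\<dots> \<le> e + sum_list (map (\<lambda>w. e) ws)"
    using Xh_error(2)[OF j0] Xh_error(2) ws unfolding e_def by (intro add_mono sum_list_mono) auto
  finally show "(\<integral>\<omega>. total_error j0 t0 h ws \<omega> \<partial>M) \<le> real (Suc (length ws)) * e"
    by (simp add: sum_list_triv algebra_simps)
qed

lemma replacement_pointwise:
  assumes j0: "j0 \<in> {1..l}" and ws: "\<forall>w\<in>set ws. fst w \<in> {1..l}"
  shows "AE \<omega> in M. \<bar>(X j0 t0 \<omega> - mean j0) * prod_X ws \<omega> - (Xh j0 t0 h \<omega> - mean j0) * prod_Xh h ws \<omega>\<bar>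
    \<le> (2 * D1) ^ Suc (length ws) * total_error j0 t0 h ws \<omega>"
proof -
  have "AE \<omega> in M. \<bar>X j0 t0 \<omega>\<bar> \<le> D" using X_bounded j0 by auto
  then show ?thesis using X_list_bounded[OF ws]
  proof eventually_elim
    fix \<omega> assume X0: "\<bar>X j0 t0 \<omega>\<bar> \<le> D" and Xws: "\<forall>w\<in>set ws. \<bar>X (fst w) (snd w) \<omega>\<bar> \<le> D"
    define zs where "zs = (X j0 t0 \<omega> - mean j0, Xh j0 t0 h \<omega> - mean j0)
      # map (\<lambda>w. (X (fst w) (snd w) \<omega>, Xh (fst w) (snd w) h \<omega>)) ws"
    have centred: "\<bar>X j0 t0 \<omega> - mean j0\<bar> \<le> 2 * D1" "\<bar>Xh j0 t0 h \<omega> - mean j0\<bar> \<le> 2 * D1"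
      using X0 Xh_bound[of j0 t0 h \<omega>] mean_bound[OF j0] D_le_D1 by linarith+
    have factors: "\<bar>X (fst w) (snd w) \<omega>\<bar> \<le> 2 * D1" "\<bar>Xh (fst w) (snd w) h \<omega>\<bar> \<le> 2 * D1"
      if "w \<in> set ws" for w
      using that Xws Xh_bound[of "fst w" "snd w" h \<omega>] D_le_D1 D_nonneg by fastforce+
    have "\<bar>fst z\<bar> \<le> 2 * D1 \<and> \<bar>snd z\<bar> \<le> 2 * D1" if "z \<in> set zs" for z
      using that centred factors unfolding zs_def by auto
    then have "\<bar>prod_list (map fst zs) - prod_list (map snd zs)\<bar>
        \<le> (2 * D1) ^ length zs * sum_list (map (\<lambda>z. \<bar>fst z - snd z\<bar>) zs)"
      using D1_ge_1 by (intro prod_list_diff_le) auto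
    then show "\<bar>(X j0 t0 \<omega> - mean j0) * prod_X ws \<omega> - (Xh j0 t0 h \<omega> - mean j0) * prod_Xh h ws \<omega>\<bar>
      \<le> (2 * D1) ^ Suc (length ws) * total_error j0 t0 h ws \<omega>"
      unfolding zs_def prod_X_def prod_Xh_def total_error_def by (simp add: o_def)
  qed
qed

definition C_dec :: "nat \<Rightarrow> real" where
  "C_dec m = real (m + 1) * (2 * D1) ^ (2 * m + 1)"

lemma C_dec_nonneg: "0 \<le> C_dec m"
  unfolding C_dec_def using D1_ge_1 by simp

lemma replacement_error:
  assumes j0: "j0 \<in> {1..l}" and ws: "\<forall>w\<in>set ws. fst w \<in> {1..l}" and len: "length ws \<le> m"
  shows "\<bar>(\<integral>\<omega>. (X j0 t0 \<omega> - mean j0) * prod_X ws \<omega> \<partial>M)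
          - (\<integral>\<omega>. (Xh j0 t0 h \<omega> - mean j0) * prod_Xh h ws \<omega> \<partial>M)\<bar>
         \<le> C_dec m * (exp (- \<kappa> * real h) / \<kappa>)"
proof -
  define e where "e = exp (- \<kappa> * real h) / \<kappa>"
  let ?f = "\<lambda>\<omega>. (X j0 t0 \<omega> - mean j0) * prod_X ws \<omega>"
  let ?g = "\<lambda>\<omega>. (Xh j0 t0 h \<omega> - mean j0) * prod_Xh h ws \<omega>"
  have f_int: "integrable M ?f" by (rule centred_product_integrable[OF j0 ws])
  have g_int: "integrable M ?g" by (rule centred_approx_integrable[OF j0])
  note err = total_error_integral[OF j0 ws, of t0 h]
  have "\<bar>(\<integral>\<omega>. ?f \<omega> \<partial>M) - (\<integral>\<omega>. ?g \<omega> \<partial>M)\<bar> = \<bar>\<integral>\<omega>. ?f \<omega> - ?g \<omega> \<partial>M\<bar>"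
    using f_int g_int by simp
  also have "\<dots> \<le> (\<integral>\<omega>. \<bar>?f \<omega> - ?g \<omega>\<bar> \<partial>M)" by (rule integral_abs_bound)
  also have "\<dots> \<le> (\<integral>\<omega>. (2 * D1) ^ Suc (length ws) * total_error j0 t0 h ws \<omega> \<partial>M)"
    using f_int g_int err(1) replacement_pointwise[OF j0 ws, of t0 h] by (intro integral_mono_AE) auto
  also have "\<dots> = (2 * D1) ^ Suc (length ws) * (\<integral>\<omega>. total_error j0 t0 h ws \<omega> \<partial>M)" by simp
  also have "\<dots> \<le> (2 * D1) ^ Suc (length ws) * (real (Suc (length ws)) * e)"
    using err(2) D1_ge_1 unfolding e_def by (intro mult_left_mono) auto
  also have "\<dots> \<le> (2 * D1) ^ (2 * m + 1) * (real (m + 1) * e)"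
  proof (intro mult_mono mult_right_mono)
    show "(2 * D1) ^ Suc (length ws) \<le> (2 * D1) ^ (2 * m + 1)"
      using len D1_ge_1 by (intro power_increasing) auto
  qed (use len \<kappa>_pos D1_ge_1 in \<open>auto simp: e_def\<close>)
  also have "\<dots> = C_dec m * e" unfolding C_dec_def by simp
  finally show ?thesis unfolding e_def .
qed

lemma exp_rate_antimono: "h \<le> n \<Longrightarrow> exp (- \<kappa> * real n) / \<kappa> \<le> exp (- \<kappa> * real h) / \<kappa>"
  using \<kappa>_pos by (intro divide_right_mono) (auto simp: mult_left_mono)

text \<open>A centred approximation at time t0 decorrelates from approximations at times \<ge> t0 + g:
  the covariance is controlled by mixing across the gap g - 2h \<ge> h, and the mean of the
  centred factor by the approximation error.\<close>
lemma decorrelation_future_block: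
  assumes j0: "j0 \<in> {1..l}" and gh: "3 * h \<le> g" and len: "length U \<le> m"
    and U: "\<forall>w\<in>set U. real t0 + real g \<le> real (snd w)"
  shows "\<bar>\<integral>\<omega>. (Xh j0 t0 h \<omega> - mean j0) * prod_Xh h U \<omega> \<partial>M\<bar> \<le> 9 * D1 ^ (m + 1) * (exp (- \<kappa> * real h) / \<kappa>)"
proof -
  define e where "e = exp (- \<kappa> * real h) / \<kappa>"
  define n where "n = g - 2 * h"
  let ?Y = "\<lambda>\<omega>. Xh j0 t0 h \<omega> - mean j0"
  have e_nonneg: "0 \<le> e" unfolding e_def using \<kappa>_pos by simp
  have Y_past: "?Y \<in> borel_measurable (F (-\<infinity>) (ereal (real (t0 + h))))"
    using Xh_measurable_past[OF ZInf_nat, of t0 h "t0 + h" j0] by measurable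
  have U_future: "prod_Xh h U \<in> borel_measurable (F (ereal (real (t0 + h) + real n)) \<infinity>)"
    using U gh unfolding n_def by (intro prod_Xh_measurable_future[OF ZInf_add]) auto
  have Y_bound: "\<bar>?Y \<omega>\<bar> \<le> 2 * D1" for \<omega>
    using Xh_bound[of j0 t0 h \<omega>] mean_bound[OF j0] D_le_D1 by linarith
  have "\<bar>covariance M ?Y (prod_Xh h U)\<bar> \<le> 4 * (2 * D1) * D1 ^ m * (exp (- \<kappa> * real n) / \<kappa>)"
    using D1_ge_1 by (intro covariance_past_future_le[OF Y_past Y_bound _ U_future prod_Xh_bound[OF len]]) auto
  also have "\<dots> \<le> 4 * (2 * D1) * D1 ^ m * e"
    using exp_rate_antimono[of h n] gh D1_ge_1 unfolding e_def n_def by (intro mult_left_mono) auto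
  finally have cov: "\<bar>covariance M ?Y (prod_Xh h U)\<bar> \<le> 8 * D1 ^ (m + 1) * e" by simp
  have Xh_int: "integrable M (Xh j0 t0 h)"
    using Xh_measurable Xh_bound by (intro integrable_bounded[where c=D]) auto
  have "(\<integral>\<omega>. ?Y \<omega> \<partial>M) = (\<integral>\<omega>. Xh j0 t0 h \<omega> \<partial>M) - (\<integral>\<omega>. X j0 t0 \<omega> \<partial>M)"
    using Xh_int X_mean_stationary[OF j0, of t0] by (simp add: mean_def prob_space)
  also have "\<dots> = (\<integral>\<omega>. Xh j0 t0 h \<omega> - X j0 t0 \<omega> \<partial>M)"
    using Xh_int X_integrable[OF j0] by simp
  finally have "\<bar>\<integral>\<omega>. ?Y \<omega> \<partial>M\<bar> \<le> (\<integral>\<omega>. \<bar>X j0 t0 \<omega> - Xh j0 t0 h \<omega>\<bar> \<partial>M)"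
    using integral_abs_bound[of M "\<lambda>\<omega>. Xh j0 t0 h \<omega> - X j0 t0 \<omega>"] by (simp only: abs_minus_commute)
  also have "\<dots> \<le> e" unfolding e_def by (rule Xh_error(2)[OF j0])
  finally have mean_Y: "\<bar>\<integral>\<omega>. ?Y \<omega> \<partial>M\<bar> \<le> e" .
  have mean_U: "\<bar>\<integral>\<omega>. prod_Xh h U \<omega> \<partial>M\<bar> \<le> D1 ^ m"
    using prod_Xh_bound[OF len] by (intro abs_integral_le_AE_bound) auto
  have "\<bar>\<integral>\<omega>. ?Y \<omega> * prod_Xh h U \<omega> \<partial>M\<bar>
      \<le> \<bar>covariance M ?Y (prod_Xh h U)\<bar> + \<bar>\<integral>\<omega>. ?Y \<omega> \<partial>M\<bar> * \<bar>\<integral>\<omega>. prod_Xh h U \<omega> \<partial>M\<bar>"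
    by (rule abs_integral_mult_le_covariance)
  also have "\<dots> \<le> 8 * D1 ^ (m + 1) * e + e * D1 ^ m"
    using cov mean_Y mean_U e_nonneg by (intro add_mono mult_mono) auto
  also have "\<dots> \<le> 9 * D1 ^ (m + 1) * e"
    using D1_ge_1 e_nonneg by (simp add: mult_left_mono mult.commute)
  finally show ?thesis unfolding e_def .
qed

text \<open>The factors at times \<le> t0 - g separate, by mixing across the gap g - 2h, from the
  centred factor at t0 times factors at times \<ge> t0 + g.\<close>
lemma decorrelation_past_split:
  assumes j0: "j0 \<in> {1..l}" and gh: "3 * h \<le> g" and g_le: "g \<le> t0"
    and len_L: "length L \<le> m" and L_before: "\<forall>w\<in>set L. real (snd w) + real g \<le> real t0"
    and len_U: "length U \<le> m" and U_after: "\<forall>w\<in>set U. real t0 + real g \<le> real (snd w)"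
  shows "\<bar>covariance M (prod_Xh h L) (\<lambda>\<omega>. (Xh j0 t0 h \<omega> - mean j0) * prod_Xh h U \<omega>)\<bar>
    \<le> 8 * D1 ^ (2 * m + 1) * (exp (- \<kappa> * real h) / \<kappa>)"
proof -
  define k where "k = t0 - g + h"
  define n where "n = g - 2 * h"
  let ?W = "\<lambda>\<omega>. (Xh j0 t0 h \<omega> - mean j0) * prod_Xh h U \<omega>"
  have L_past: "prod_Xh h L \<in> borel_measurable (F (-\<infinity>) (ereal (real k)))"
    using L_before g_le unfolding k_def by (intro prod_Xh_measurable_past[OF ZInf_nat]) (fastforce simp: of_nat_diff)
  have future: "real k + real n = real t0 - real h" unfolding k_def n_def using g_le gh by auto
  have "Xh j0 t0 h \<in> borel_measurable (F (ereal (real k + real n)) \<infinity>)"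
    using future by (intro Xh_measurable_future[OF ZInf_add]) auto
  moreover have "prod_Xh h U \<in> borel_measurable (F (ereal (real k + real n)) \<infinity>)"
    using future U_after by (intro prod_Xh_measurable_future[OF ZInf_add]) fastforce
  ultimately have W_future: "?W \<in> borel_measurable (F (ereal (real k + real n)) \<infinity>)" by measurable
  have W_bound: "\<bar>?W \<omega>\<bar> \<le> 2 * D1 * D1 ^ m" for \<omega>
    using Xh_bound[of j0 t0 h \<omega>] mean_bound[OF j0] D_le_D1 prod_Xh_bound[OF len_U]
    by (intro abs_mult_bound) auto
  have "\<bar>covariance M (prod_Xh h L) ?W\<bar> \<le> 4 * D1 ^ m * (2 * D1 * D1 ^ m) * (exp (- \<kappa> * real n) / \<kappa>)"
    using D1_ge_1 by (intro covariance_past_future_le[OF L_past prod_Xh_bound[OF len_L] _ W_future W_bound]) auto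
  also have "\<dots> \<le> 4 * D1 ^ m * (2 * D1 * D1 ^ m) * (exp (- \<kappa> * real h) / \<kappa>)"
    unfolding n_def using gh D1_ge_1 by (intro mult_left_mono exp_rate_antimono) auto
  also have "\<dots> = 8 * D1 ^ (2 * m + 1) * (exp (- \<kappa> * real h) / \<kappa>)"
    unfolding D1_power_double by (simp add: mult_ac)
  finally show ?thesis .
qed

text \<open>The factors before t0 are
  split off by the previous lemma, the factors after t0 are handled by the future block lemma.\<close>
lemma decorrelation_approx:
  assumes j0: "j0 \<in> {1..l}" and gh: "3 * h \<le> g" and len: "length ws \<le> m"
    and gap: "\<forall>w\<in>set ws. real g \<le> \<bar>real (snd w) - real t0\<bar>"
  shows "\<bar>\<integral>\<omega>. (Xh j0 t0 h \<omega> - mean j0) * prod_Xh h ws \<omega> \<partial>M\<bar>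
    \<le> 17 * D1 ^ (2 * m + 1) * (exp (- \<kappa> * real h) / \<kappa>)"
proof -
  define e where "e = exp (- \<kappa> * real h) / \<kappa>"
  define L where "L = filter (\<lambda>w. snd w < t0) ws"
  define U where "U = filter (\<lambda>w. \<not> snd w < t0) ws"
  define W where "W \<omega> = (Xh j0 t0 h \<omega> - mean j0) * prod_Xh h U \<omega>" for \<omega>
  have e_nonneg: "0 \<le> e" unfolding e_def using \<kappa>_pos by simp
  have L_before: "\<forall>w\<in>set L. real (snd w) + real g \<le> real t0"
    and U_after: "\<forall>w\<in>set U. real t0 + real g \<le> real (snd w)"
    using gap unfolding L_def U_def by force+
  have len_L: "length L \<le> m" and len_U: "length U \<le> m"
    using len length_filter_le[of _ ws] unfolding L_def U_def by (meson order.trans)+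
  have split: "(Xh j0 t0 h \<omega> - mean j0) * prod_Xh h ws \<omega> = prod_Xh h L \<omega> * W \<omega>" for \<omega>
    unfolding prod_Xh_def L_def U_def W_def
    by (subst prod_list_partition[where P="\<lambda>w. snd w < t0"]) simp
  have EW: "\<bar>\<integral>\<omega>. W \<omega> \<partial>M\<bar> \<le> 9 * D1 ^ (m + 1) * e"
    unfolding W_def e_def using U_after by (intro decorrelation_future_block[OF j0 gh len_U]) auto
  show ?thesis
  proof (cases "L = []")
    case True
    have "D1 ^ (m + 1) \<le> D1 ^ (2 * m + 1)" using D1_ge_1 by (intro power_increasing) auto
    then have "9 * D1 ^ (m + 1) * e \<le> 17 * D1 ^ (2 * m + 1) * e"
      using e_nonneg D1_ge_1 by (intro mult_right_mono mult_mono) auto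
    then show ?thesis using True EW unfolding split e_def by (simp add: prod_Xh_def)
  next
    case False
    then have g_le: "g \<le> t0" using L_before by (cases L) fastforce+
    have cov: "\<bar>covariance M (prod_Xh h L) W\<bar> \<le> 8 * D1 ^ (2 * m + 1) * e"
      unfolding W_def e_def by (rule decorrelation_past_split[OF j0 gh g_le len_L L_before len_U U_after])
    have mean_L: "\<bar>\<integral>\<omega>. prod_Xh h L \<omega> \<partial>M\<bar> \<le> D1 ^ m"
      using prod_Xh_bound[OF len_L] by (intro abs_integral_le_AE_bound) auto
    have "\<bar>\<integral>\<omega>. (Xh j0 t0 h \<omega> - mean j0) * prod_Xh h ws \<omega> \<partial>M\<bar>
        \<le> \<bar>covariance M (prod_Xh h L) W\<bar> + \<bar>\<integral>\<omega>. prod_Xh h L \<omega> \<partial>M\<bar> * \<bar>\<integral>\<omega>. W \<omega> \<partial>M\<bar>"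
      unfolding split by (rule abs_integral_mult_le_covariance)
    also have "\<dots> \<le> 8 * D1 ^ (2 * m + 1) * e + D1 ^ m * (9 * D1 ^ (m + 1) * e)"
      using cov mean_L EW by (intro add_mono mult_mono) auto
    also have "\<dots> = 17 * D1 ^ (2 * m + 1) * e" unfolding D1_power_double by (simp add: mult_ac)
    finally show ?thesis unfolding e_def .
  qed
qed

lemma D1_power_le_C_dec: "D1 ^ (2 * m + 1) \<le> C_dec m"
proof -
  have "D1 ^ (2 * m + 1) \<le> (2 * D1) ^ (2 * m + 1)" using D1_ge_1 by (intro power_mono) auto
  also have "\<dots> \<le> C_dec m" unfolding C_dec_def using D1_ge_1 by simp
  finally show ?thesis .
qed

text \<open>Decorrelation of the process: if all other times are at distance at least g from t0, the
  centred factor at t0 is nearly uncorrelated with the product; take the window radius g div 3.\<close>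
lemma decorrelation:
  assumes j0: "j0 \<in> {1..l}" and ws: "\<forall>w\<in>set ws. fst w \<in> {1..l}" and len: "length ws \<le> m"
    and gap: "\<forall>w\<in>set ws. real g \<le> \<bar>real (snd w) - real t0\<bar>"
  shows "\<bar>\<integral>\<omega>. (X j0 t0 \<omega> - mean j0) * prod_X ws \<omega> \<partial>M\<bar> \<le> 18 * C_dec m * (exp (- \<kappa> * real (g div 3)) / \<kappa>)"
proof -
  define h where "h = g div 3"
  define e where "e = exp (- \<kappa> * real h) / \<kappa>"
  have e_nonneg: "0 \<le> e" unfolding e_def using \<kappa>_pos by simp
  have "\<bar>(\<integral>\<omega>. (X j0 t0 \<omega> - mean j0) * prod_X ws \<omega> \<partial>M)
          - (\<integral>\<omega>. (Xh j0 t0 h \<omega> - mean j0) * prod_Xh h ws \<omega> \<partial>M)\<bar> \<le> C_dec m * e"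
    unfolding e_def by (rule replacement_error[OF j0 ws len])
  moreover have "\<bar>\<integral>\<omega>. (Xh j0 t0 h \<omega> - mean j0) * prod_Xh h ws \<omega> \<partial>M\<bar> \<le> 17 * D1 ^ (2 * m + 1) * e"
    unfolding e_def h_def by (rule decorrelation_approx[OF j0 _ len gap]) simp
  moreover have "17 * D1 ^ (2 * m + 1) * e \<le> 17 * C_dec m * e"
    using D1_power_le_C_dec e_nonneg by (intro mult_right_mono) auto
  ultimately show ?thesis unfolding e_def h_def by linarith
qed

definition weight :: "nat \<Rightarrow> nat \<Rightarrow> real" where
  "weight u v = exp (- (\<kappa> / 3) * \<bar>real u - real v\<bar>)"

lemma weight_nonneg: "0 \<le> weight u v"
  unfolding weight_def by simp

text \<open>The decorrelation estimate in additive form: the minimal distance is dominated by the sum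
  of the weights of all factors, at the cost of the factor exp \<kappa> for rounding g to g div 3.\<close>
lemma decorrelation_sum:
  assumes j0: "j0 \<in> {1..l}" and ws: "\<forall>w\<in>set ws. fst w \<in> {1..l}" and len: "length ws \<le> m"
  shows "\<bar>\<integral>\<omega>. (X j0 t0 \<omega> - mean j0) * prod_X ws \<omega> \<partial>M\<bar>
    \<le> 18 * C_dec m * exp \<kappa> / \<kappa> * sum_list (map (\<lambda>w. weight (snd w) t0) ws)"
proof (cases "ws = []")
  case True
  have "(\<integral>\<omega>. (X j0 t0 \<omega> - mean j0) * prod_X ws \<omega> \<partial>M) = (\<integral>\<omega>. X j0 t0 \<omega> \<partial>M) - mean j0"
    using True X_integrable[OF j0] by (simp add: prod_X_def prob_space)
  also have "\<dots> = 0" using X_mean_stationary[OF j0] unfolding mean_def by simp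
  finally show ?thesis using True by simp
next
  case False
  define dist where "dist w = nat \<bar>int (snd w) - int t0\<bar>" for w :: "nat \<times> nat"
  have dist_real: "real (dist w) = \<bar>real (snd w) - real t0\<bar>" for w unfolding dist_def by simp
  define g where "g = Min (dist ` set ws)"
  have fin: "finite (dist ` set ws)" and ne: "dist ` set ws \<noteq> {}" using False by auto
  have gap: "\<forall>w\<in>set ws. real g \<le> \<bar>real (snd w) - real t0\<bar>"
    unfolding g_def dist_real[symmetric] using fin by auto
  obtain w0 where w0: "w0 \<in> set ws" "dist w0 = g" using Min_in[OF fin ne] unfolding g_def by auto
  have "exp (- \<kappa> * real (g div 3)) \<le> exp \<kappa> * exp (- (\<kappa> / 3) * real g)"
  proof -
    have "real g \<le> 3 * real (g div 3) + 3" by linarith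
    then have "\<kappa> * real g \<le> \<kappa> * (3 * real (g div 3) + 3)" using \<kappa>_pos by (intro mult_left_mono) auto
    then have "- \<kappa> * real (g div 3) \<le> \<kappa> + (- (\<kappa> / 3) * real g)" by (simp add: field_simps)
    then show ?thesis by (simp add: exp_add[symmetric])
  qed
  also have "exp (- (\<kappa> / 3) * real g) = weight (snd w0) t0"
    unfolding weight_def using dist_real[of w0] w0(2) by simp
  also have "\<dots> \<le> sum_list (map (\<lambda>w. weight (snd w) t0) ws)"
    using w0(1) weight_nonneg by (intro member_le_sum_list) auto
  finally have "exp (- \<kappa> * real (g div 3)) / \<kappa> \<le> exp \<kappa> / \<kappa> * sum_list (map (\<lambda>w. weight (snd w) t0) ws)"
    using \<kappa>_pos by (simp add: divide_right_mono)
  then have "18 * C_dec m * (exp (- \<kappa> * real (g div 3)) / \<kappa>)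
      \<le> 18 * C_dec m * (exp \<kappa> / \<kappa> * sum_list (map (\<lambda>w. weight (snd w) t0) ws))"
    using C_dec_nonneg by (intro mult_left_mono) auto
  then show ?thesis using decorrelation[OF j0 ws len gap] by simp
qed

subsection \<open>Growth of the sequences q j\<close>

definition N0 :: nat where
  "N0 = nat \<lceil>n0\<rceil>"

lemma N0_le: "N0 \<le> k \<Longrightarrow> n0 \<le> real k"
  unfolding N0_def by linarith

text \<open>From N0 on, every q j increases by at least one per step: q 1 is linear, the others by (C3).\<close>
lemma q_step:
  assumes j: "j \<in> {1..l}" and k: "N0 \<le> k"
  shows "real (q j k) + 1 \<le> real (q j (Suc k))"
proof (cases "j = 1")
  case True
  then show ?thesis using q1_linear r_pos by simp
next
  case False
  then have j2: "j \<in> {2..l}" using j by auto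
  have kn: "n0 \<le> real k" using N0_le[OF k] .
  then have "real (q j (k + 1)) \<ge> real (q j k) + real k powr \<gamma>" using q_growth j2 by blast
  moreover have "1 \<le> real k powr \<gamma>" using kn n0_gt1 \<gamma>_pos by (intro ge_one_powr_ge_zero) auto
  ultimately show ?thesis by simp
qed

lemma q_mono:
  assumes j: "j \<in> {1..l}" and "N0 \<le> k1" "k1 \<le> k2"
  shows "q j k1 \<le> q j k2"
  using eventually_increasing_gap[of N0 "\<lambda>k. real (q j k)" k1 k2] q_step[OF j] assms(2,3) by simp

text \<open>From the threshold K1 on, (C4) makes consecutive sequences at least double each other.\<close>
definition K1 :: nat where
  "K1 = N0 + nat \<lceil>(real N0 + 1) powr (1 / (1 - \<gamma>))\<rceil> + nat \<lceil>2 powr (1 / \<gamma>)\<rceil>"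

lemma powr_threshold:
  fixes y e x :: real
  assumes "0 < e" "0 < y" "y powr (1 / e) \<le> x"
  shows "y \<le> x powr e"
proof -
  have "y = (y powr (1 / e)) powr e" using assms by (simp add: powr_powr)
  also have "\<dots> \<le> x powr e" using assms by (intro powr_mono2) auto
  finally show ?thesis .
qed

lemma K1_le:
  assumes k: "K1 \<le> k"
  shows "N0 \<le> k" "real N0 \<le> real k powr (1 - \<gamma>)" "2 \<le> real k powr \<gamma>"
proof -
  show "N0 \<le> k" using k unfolding K1_def by simp
  have "(real N0 + 1) powr (1 / (1 - \<gamma>)) \<le> real k" using k unfolding K1_def by linarith
  then have "real N0 + 1 \<le> real k powr (1 - \<gamma>)" using \<gamma>_lt1 by (intro powr_threshold) auto
  then show "real N0 \<le> real k powr (1 - \<gamma>)" by simp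
  have "2 powr (1 / \<gamma>) \<le> real k" using k unfolding K1_def by linarith
  then show "2 \<le> real k powr \<gamma>" using \<gamma>_pos by (intro powr_threshold) auto
qed

text \<open>(C4) together with monotonicity makes q (m+1) k at least twice q m k for k \<ge> K1.\<close>
lemma q_doubling:
  assumes k: "K1 \<le> k" and m: "m \<in> {1..l-1}"
  shows "2 * q m k \<le> q (Suc m) k"
proof -
  note K1 = K1_le[OF k]
  have kn: "n0 \<le> real k" using N0_le[OF K1(1)] .
  have k1: "1 \<le> real k" using kn n0_gt1 by linarith
  define k' where "k' = nat \<lfloor>real k powr (1 - \<gamma>)\<rfloor>"
  have "real (q m k) * 2 \<le> real (q m k) * real k powr \<gamma>" using K1(3) by (intro mult_left_mono) auto
  also have "\<dots> \<le> real (q (m + 1) k')" using q_separation kn m unfolding k'_def by blast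
  also have "q (m + 1) k' \<le> q (m + 1) k"
  proof (rule q_mono)
    show "m + 1 \<in> {1..l}" using m by auto
    show "N0 \<le> k'" unfolding k'_def using K1(2) by (simp add: le_nat_floor)
    have "real k powr (1 - \<gamma>) \<le> real k" using k1 \<gamma>_pos powr_mono[of "1 - \<gamma>" 1 "real k"] by simp
    then show "k' \<le> k" unfolding k'_def by (simp add: nat_le_iff floor_le_iff)
  qed
  finally show ?thesis by simp
qed

lemma q_chain:
  assumes k: "K1 \<le> k" and ij: "1 \<le> i" "i < j" "j \<le> l"
  shows "2 * q i k \<le> q j k"
  using ij
proof (induction j)
  case 0
  then show ?case by simp
next
  case (Suc j)
  have double: "2 * q j k \<le> q (Suc j) k" using Suc.prems by (intro q_doubling[OF k]) auto
  show ?case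
  proof (cases "i = j")
    case True
    then show ?thesis using double by simp
  next
    case False
    then show ?thesis using Suc double by linarith
  qed
qed

text \<open>All q m k are at least k, since q 1 k = r k + p \<ge> k.\<close>
lemma q_ge_index:
  assumes k: "K1 \<le> k" and m: "m \<in> {1..l}"
  shows "k \<le> q m k"
proof (cases "m = 1")
  case True
  then show ?thesis using q1_linear r_pos by (simp add: trans_le_add1)
next
  case False
  then have "2 * q 1 k \<le> q m k" using m by (intro q_chain[OF k]) auto
  moreover have "k \<le> q 1 k" using q1_linear r_pos by (simp add: trans_le_add1)
  ultimately show ?thesis by linarith
qed

lemma q_gap:
  assumes k: "K1 \<le> k" and ij: "i \<in> {1..l}" "j \<in> {1..l}" "i \<noteq> j"
  shows "real k \<le> \<bar>real (q j k) - real (q i k)\<bar>"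
proof (cases "i < j")
  case True
  then have "2 * q i k \<le> q j k" "k \<le> q i k" using q_chain[OF k] q_ge_index[OF k] ij by auto
  then show ?thesis by linarith
next
  case False
  then have "2 * q j k \<le> q i k" "k \<le> q j k" using q_chain[OF k] q_ge_index[OF k] ij by auto
  then show ?thesis by linarith
qed

subsection \<open>The second moment of the partial sums\<close>

definition upper_factors :: "nat \<Rightarrow> nat \<Rightarrow> (nat \<times> nat) list" where
  "upper_factors k i = map (\<lambda>j. (j, q j k)) [Suc i..<Suc l]"

lemma upper_factors_components: "\<forall>w\<in>set (upper_factors k i). fst w \<in> {1..l}"
  unfolding upper_factors_def by auto

lemma length_upper_factors: "length (upper_factors k i) = l - i"
  unfolding upper_factors_def length_map length_upt by simp

lemma prod_X_upper_factors: "prod_X (upper_factors k i) \<omega> = (\<Prod>j\<in>{i<..l}. X j (q j k) \<omega>)"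
proof -
  have "prod_X (upper_factors k i) \<omega> = prod_list (map (\<lambda>j. X j (q j k) \<omega>) [Suc i..<Suc l])"
    unfolding prod_X_def upper_factors_def by (simp add: o_def)
  also have "\<dots> = (\<Prod>j\<in>{i<..l}. X j (q j k) \<omega>)"
    by (subst prod.distinct_set_conv_list[symmetric]) (auto intro!: prod.cong)
  finally show ?thesis .
qed

lemma sum_weight_upper_factors:
  "sum_list (map (\<lambda>w. weight (snd w) t) (upper_factors k i)) = (\<Sum>j\<in>{i<..l}. weight (q j k) t)"
proof -
  have "sum_list (map (\<lambda>w. weight (snd w) t) (upper_factors k i)) = sum_list (map (\<lambda>j. weight (q j k) t) [Suc i..<Suc l])"
    unfolding upper_factors_def by (simp add: o_def)
  also have "\<dots> = (\<Sum>j\<in>{i<..l}. weight (q j k) t)"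
    by (subst sum.distinct_set_conv_list[symmetric]) (auto intro!: sum.cong)
  finally show ?thesis .
qed

definition R :: "nat \<Rightarrow> 'a \<Rightarrow> real" where
  "R k \<omega> = (\<Prod>j\<in>{1..l}. X j (q j k) \<omega>) - (\<Prod>j\<in>{1..l}. mean j)"

definition mean_prefix :: "nat \<Rightarrow> real" where
  "mean_prefix i = (\<Prod>j\<in>{1..<i}. mean j)"

definition centred_upper :: "nat \<Rightarrow> nat \<Rightarrow> 'a \<Rightarrow> real" where
  "centred_upper k i \<omega> = (X i (q i k) \<omega> - mean i) * prod_X (upper_factors k i) \<omega>"

lemma R_telescope: "R k \<omega> = (\<Sum>i\<in>{1..l}. mean_prefix i * centred_upper k i \<omega>)"
  unfolding R_def mean_prefix_def centred_upper_def prod_diff_telescope prod_X_upper_factors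
  by (simp add: algebra_simps)

lemma mean_prefix_bound: "i \<in> {1..l} \<Longrightarrow> \<bar>mean_prefix i\<bar> \<le> D1 ^ l"
proof -
  assume i: "i \<in> {1..l}"
  have "\<bar>mean_prefix i\<bar> = (\<Prod>j\<in>{1..<i}. \<bar>mean j\<bar>)" unfolding mean_prefix_def by (simp add: abs_prod)
  also have "\<dots> \<le> (\<Prod>j\<in>{1..<i}. D1)"
  proof (intro prod_mono conjI abs_ge_zero)
    fix j assume "j \<in> {1..<i}"
    then have "\<bar>mean j\<bar> \<le> D" using i by (intro mean_bound) auto
    then show "\<bar>mean j\<bar> \<le> D1" using D_le_D1 by linarith
  qed
  also have "\<dots> = D1 ^ (i - 1)" by simp
  also have "\<dots> \<le> D1 ^ l" using D1_ge_1 i by (intro power_increasing) auto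
  finally show ?thesis .
qed

definition local_weight :: "nat \<Rightarrow> nat \<Rightarrow> nat \<Rightarrow> real" where
  "local_weight k k' i = (\<Sum>j\<in>{1..l}-{i}. weight (q j k) (q i k)) + (\<Sum>j\<in>{1..l}. weight (q j k') (q i k))"

definition K_dec :: real where
  "K_dec = 18 * C_dec (2 * l) * exp \<kappa> / \<kappa>"

lemma K_dec_nonneg: "0 \<le> K_dec"
  unfolding K_dec_def using C_dec_nonneg \<kappa>_pos by simp

lemma upper_factors_weight_le:
  assumes i: "i \<in> {1..l}" and i': "i' \<in> {1..l}"
  shows "sum_list (map (\<lambda>w. weight (snd w) (q i k)) (upper_factors k i @ ((i', q i' k') # upper_factors k' i')))
      \<le> local_weight k k' i"
    and "sum_list (map (\<lambda>w. weight (snd w) (q i k)) (upper_factors k i @ upper_factors k' i'))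
      \<le> local_weight k k' i"
proof -
  have "(\<Sum>j\<in>{i<..l}. weight (q j k) (q i k)) \<le> (\<Sum>j\<in>{1..l}-{i}. weight (q j k) (q i k))"
    using i by (intro sum_mono2) (auto simp: weight_nonneg)
  moreover have "weight (q i' k') (q i k) + (\<Sum>j\<in>{i'<..l}. weight (q j k') (q i k))
      = (\<Sum>j\<in>insert i' {i'<..l}. weight (q j k') (q i k))" by simp
  moreover have "\<dots> \<le> (\<Sum>j\<in>{1..l}. weight (q j k') (q i k))"
    using i' by (intro sum_mono2) (auto simp: weight_nonneg)
  moreover have "(\<Sum>j\<in>{i'<..l}. weight (q j k') (q i k)) \<le> (\<Sum>j\<in>{1..l}. weight (q j k') (q i k))"
    by (intro sum_mono2) (auto simp: weight_nonneg)
  ultimately show "sum_list (map (\<lambda>w. weight (snd w) (q i k)) (upper_factors k i @ ((i', q i' k') # upper_factors k' i')))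
      \<le> local_weight k k' i"
    and "sum_list (map (\<lambda>w. weight (snd w) (q i k)) (upper_factors k i @ upper_factors k' i'))
      \<le> local_weight k k' i"
    unfolding local_weight_def by (auto simp: sum_weight_upper_factors)
qed

text \<open>Covariance of two centred products: expanding the second centred factor expresses it
  through two centred products at time q i k, both covered by the decorrelation estimate.\<close>
lemma centred_upper_cross:
  assumes i: "i \<in> {1..l}" and i': "i' \<in> {1..l}"
  shows "integrable M (\<lambda>\<omega>. centred_upper k i \<omega> * centred_upper k' i' \<omega>)"
    and "\<bar>\<integral>\<omega>. centred_upper k i \<omega> * centred_upper k' i' \<omega> \<partial>M\<bar> \<le> (1 + D) * K_dec * local_weight k k' i"
proof -
  define L1 where "L1 = upper_factors k i @ ((i', q i' k') # upper_factors k' i')"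
  define L2 where "L2 = upper_factors k i @ upper_factors k' i'"
  let ?c = "\<lambda>L \<omega>. (X i (q i k) \<omega> - mean i) * prod_X L \<omega>"
  have L1: "\<forall>w\<in>set L1. fst w \<in> {1..l}" and L2: "\<forall>w\<in>set L2. fst w \<in> {1..l}"
    unfolding L1_def L2_def using upper_factors_components i' by auto
  have len: "length L1 \<le> 2 * l" "length L2 \<le> 2 * l"
    unfolding L1_def L2_def using i i' by (auto simp: length_upper_factors)
  have expand: "centred_upper k i \<omega> * centred_upper k' i' \<omega> = ?c L1 \<omega> - mean i' * ?c L2 \<omega>" for \<omega>
    unfolding centred_upper_def L1_def L2_def prod_X_def by (simp add: algebra_simps)
  have int: "integrable M (?c L1)" "integrable M (?c L2)"
    by (intro centred_product_integrable[OF i] L1 L2)+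
  then show "integrable M (\<lambda>\<omega>. centred_upper k i \<omega> * centred_upper k' i' \<omega>)"
    unfolding expand by simp
  have bound: "\<bar>\<integral>\<omega>. ?c L \<omega> \<partial>M\<bar> \<le> K_dec * local_weight k k' i" if "L = L1 \<or> L = L2" for L
  proof -
    have "\<bar>\<integral>\<omega>. ?c L \<omega> \<partial>M\<bar> \<le> K_dec * sum_list (map (\<lambda>w. weight (snd w) (q i k)) L)"
      unfolding K_dec_def using that L1 L2 len by (intro decorrelation_sum[OF i]) auto
    also have "\<dots> \<le> K_dec * local_weight k k' i"
      using that upper_factors_weight_le[OF i i'] K_dec_nonneg unfolding L1_def L2_def
      by (intro mult_left_mono) auto
    finally show ?thesis .
  qed
  have "\<bar>\<integral>\<omega>. centred_upper k i \<omega> * centred_upper k' i' \<omega> \<partial>M\<bar>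
      = \<bar>(\<integral>\<omega>. ?c L1 \<omega> \<partial>M) - mean i' * (\<integral>\<omega>. ?c L2 \<omega> \<partial>M)\<bar>"
    unfolding expand using int by simp
  also have "\<dots> \<le> K_dec * local_weight k k' i + D * (K_dec * local_weight k k' i)"
    using bound mean_bound[OF i'] by (intro order.trans[OF abs_triangle_ineq4] add_mono)
      (auto simp: abs_mult intro!: mult_mono K_dec_nonneg)
  also have "\<dots> = (1 + D) * K_dec * local_weight k k' i" by (simp add: algebra_simps)
  finally show "\<bar>\<integral>\<omega>. centred_upper k i \<omega> * centred_upper k' i' \<omega> \<partial>M\<bar> \<le> (1 + D) * K_dec * local_weight k k' i" .
qed

definition K_R :: real where
  "K_R = real l * D1 ^ l * D1 ^ l * ((1 + D) * K_dec)"

lemma K_R_nonneg: "0 \<le> K_R"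
  unfolding K_R_def using D1_ge_1 D_nonneg K_dec_nonneg by simp

lemma R_product:
  shows "integrable M (\<lambda>\<omega>. R k \<omega> * R k' \<omega>)"
    and "\<bar>\<integral>\<omega>. R k \<omega> * R k' \<omega> \<partial>M\<bar> \<le> K_R * (\<Sum>i\<in>{1..l}. local_weight k k' i)"
proof -
  let ?t = "\<lambda>i i' \<omega>. mean_prefix i * mean_prefix i' * (centred_upper k i \<omega> * centred_upper k' i' \<omega>)"
  have expand: "R k \<omega> * R k' \<omega> = (\<Sum>i\<in>{1..l}. \<Sum>i'\<in>{1..l}. ?t i i' \<omega>)" for \<omega>
    unfolding R_telescope sum_product by (intro sum.cong refl) (simp add: algebra_simps)
  have t_int: "integrable M (?t i i')" if "i \<in> {1..l}" "i' \<in> {1..l}" for i i'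
    using centred_upper_cross(1)[OF that] by simp
  then show "integrable M (\<lambda>\<omega>. R k \<omega> * R k' \<omega>)"
    unfolding expand by (intro Bochner_Integration.integrable_sum) auto
  have "(\<integral>\<omega>. R k \<omega> * R k' \<omega> \<partial>M) = (\<Sum>i\<in>{1..l}. \<integral>\<omega>. (\<Sum>i'\<in>{1..l}. ?t i i' \<omega>) \<partial>M)"
    unfolding expand by (intro Bochner_Integration.integral_sum Bochner_Integration.integrable_sum t_int) auto
  also have "\<dots> = (\<Sum>i\<in>{1..l}. \<Sum>i'\<in>{1..l}. \<integral>\<omega>. ?t i i' \<omega> \<partial>M)"
    by (intro sum.cong refl Bochner_Integration.integral_sum t_int) auto
  finally have integral_eq: "(\<integral>\<omega>. R k \<omega> * R k' \<omega> \<partial>M) = (\<Sum>i\<in>{1..l}. \<Sum>i'\<in>{1..l}. \<integral>\<omega>. ?t i i' \<omega> \<partial>M)" .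
  have "\<bar>\<integral>\<omega>. R k \<omega> * R k' \<omega> \<partial>M\<bar> \<le> (\<Sum>i\<in>{1..l}. \<Sum>i'\<in>{1..l}. \<bar>\<integral>\<omega>. ?t i i' \<omega> \<partial>M\<bar>)"
    unfolding integral_eq by (rule order.trans[OF sum_abs], rule sum_mono, rule sum_abs)
  also have "\<dots> \<le> (\<Sum>i\<in>{1..l}. \<Sum>i'\<in>{1..l}. D1 ^ l * D1 ^ l * ((1 + D) * K_dec * local_weight k k' i))"
  proof (intro sum_mono)
    fix i i' assume i: "i \<in> {1..l}" and i': "i' \<in> {1..l}"
    have "\<bar>\<integral>\<omega>. ?t i i' \<omega> \<partial>M\<bar>
        = \<bar>mean_prefix i * mean_prefix i'\<bar> * \<bar>\<integral>\<omega>. centred_upper k i \<omega> * centred_upper k' i' \<omega> \<partial>M\<bar>"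
      by (simp add: abs_mult)
    also have "\<dots> \<le> D1 ^ l * D1 ^ l * ((1 + D) * K_dec * local_weight k k' i)"
      using mean_prefix_bound[OF i] mean_prefix_bound[OF i'] centred_upper_cross(2)[OF i i']
      by (intro mult_mono abs_mult_bound) auto
    finally show "\<bar>\<integral>\<omega>. ?t i i' \<omega> \<partial>M\<bar> \<le> D1 ^ l * D1 ^ l * ((1 + D) * K_dec * local_weight k k' i)" .
  qed
  also have "\<dots> = K_R * (\<Sum>i\<in>{1..l}. local_weight k k' i)"
    unfolding K_R_def by (simp add: sum_distrib_left mult_ac)
  finally show "\<bar>\<integral>\<omega>. R k \<omega> * R k' \<omega> \<partial>M\<bar> \<le> K_R * (\<Sum>i\<in>{1..l}. local_weight k k' i)" .
qed

definition self_weight :: "nat \<Rightarrow> real" where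
  "self_weight k = (\<Sum>i\<in>{1..l}. \<Sum>j\<in>{1..l}-{i}. weight (q j k) (q i k))"

definition cross_weight :: "nat \<Rightarrow> nat \<Rightarrow> real" where
  "cross_weight k k' = (\<Sum>i\<in>{1..l}. \<Sum>j\<in>{1..l}. weight (q j k') (q i k))"

lemma sum_local_weight: "(\<Sum>i\<in>{1..l}. local_weight k k' i) = self_weight k + cross_weight k k'"
  unfolding local_weight_def self_weight_def cross_weight_def by (rule sum.distrib)

text \<open>The sequences q j separate geometrically (C4), so self-weights are summable in k.\<close>
lemma self_weight_sum_le:
  "(\<Sum>k=0..n. self_weight k) \<le> real l * real l * (real K1 + 1 / (1 - exp (- (\<kappa> / 3))))"
proof -
  let ?CA = "real K1 + 1 / (1 - exp (- (\<kappa> / 3)))"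
  have "(\<Sum>k=0..n. self_weight k) = (\<Sum>i\<in>{1..l}. \<Sum>j\<in>{1..l}-{i}. \<Sum>k=0..n. weight (q j k) (q i k))"
    unfolding self_weight_def by (subst sum.swap, intro sum.cong refl sum.swap)
  also have "\<dots> \<le> (\<Sum>i\<in>{1..l}. \<Sum>j\<in>{1..l}-{i}. ?CA)"
  proof (intro sum_mono)
    fix i j assume i: "i \<in> {1..l}" and j: "j \<in> {1..l} - {i}"
    show "(\<Sum>k=0..n. weight (q j k) (q i k)) \<le> ?CA"
      unfolding weight_def
      by (rule sum_exp_linear_gap_le[where d="\<lambda>k. \<bar>real (q j k) - real (q i k)\<bar>"])
        (use \<kappa>_pos q_gap[OF _ i] j in auto)
  qed
  also have "\<dots> \<le> (\<Sum>i\<in>{1..l}. \<Sum>j\<in>{1..l}. ?CA)"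
    using \<kappa>_pos by (intro sum_mono sum_mono2) auto
  also have "\<dots> = real l * real l * ?CA" by simp
  finally show ?thesis .
qed

text \<open>Each q j eventually increases (C3), so cross-weights are summable in k'.\<close>
lemma cross_weight_sum_le:
  "(\<Sum>k'=0..n. cross_weight k k') \<le> real l * real l * (real N0 + 2 / (1 - exp (- (\<kappa> / 3) / 2)))"
proof -
  let ?CB = "real N0 + 2 / (1 - exp (- (\<kappa> / 3) / 2))"
  have "(\<Sum>k'=0..n. cross_weight k k') = (\<Sum>i\<in>{1..l}. \<Sum>j\<in>{1..l}. \<Sum>k'=0..n. weight (q j k') (q i k))"
    unfolding cross_weight_def by (subst sum.swap, intro sum.cong refl sum.swap)
  also have "\<dots> \<le> (\<Sum>i\<in>{1..l}. \<Sum>j\<in>{1..l}. ?CB)"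
  proof (intro sum_mono)
    fix i j assume "j \<in> {1..l}"
    then show "(\<Sum>k'=0..n. weight (q j k') (q i k)) \<le> ?CB"
      unfolding weight_def
      using sum_exp_dist_increasing_le[where c="\<kappa> / 3" and f="\<lambda>k. real (q j k)" and K=N0 and n=n and t="real (q i k)"]
        \<kappa>_pos q_step \<open>j \<in> {1..l}\<close> by auto
  qed
  also have "\<dots> = real l * real l * ?CB" by simp
  finally show ?thesis .
qed

lemma second_moment_expand:
  "(\<integral>\<omega>. (\<Sum>k=0..n. R k \<omega>)\<^sup>2 \<partial>M) = (\<Sum>k=0..n. \<Sum>k'=0..n. \<integral>\<omega>. R k \<omega> * R k' \<omega> \<partial>M)"
proof -
  have "(\<lambda>\<omega>. (\<Sum>k=0..n. R k \<omega>)\<^sup>2) = (\<lambda>\<omega>. \<Sum>k=0..n. \<Sum>k'=0..n. R k \<omega> * R k' \<omega>)"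
    by (simp add: power2_eq_square sum_product)
  then have "(\<integral>\<omega>. (\<Sum>k=0..n. R k \<omega>)\<^sup>2 \<partial>M) = (\<Sum>k=0..n. \<integral>\<omega>. (\<Sum>k'=0..n. R k \<omega> * R k' \<omega>) \<partial>M)"
    by (simp add: Bochner_Integration.integral_sum Bochner_Integration.integrable_sum R_product(1))
  also have "\<dots> = (\<Sum>k=0..n. \<Sum>k'=0..n. \<integral>\<omega>. R k \<omega> * R k' \<omega> \<partial>M)"
    by (intro sum.cong refl Bochner_Integration.integral_sum R_product(1))
  finally show ?thesis .
qed

lemma second_moment_linear: "\<exists>C>0. \<forall>n\<ge>1. (\<integral>\<omega>. (\<Sum>k=0..n. R k \<omega>)\<^sup>2 \<partial>M) \<le> C * real n"
proof -
  define CA where "CA = real K1 + 1 / (1 - exp (- (\<kappa> / 3)))"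
  define CB where "CB = real N0 + 2 / (1 - exp (- (\<kappa> / 3) / 2))"
  define C where "C = 2 * K_R * real l * real l * (CA + CB) + 1"
  have CAB: "0 \<le> CA + CB" unfolding CA_def CB_def using \<kappa>_pos by simp
  have nonneg: "0 \<le> K_R * real l * real l * (CA + CB)" using K_R_nonneg CAB by simp
  then have C_pos: "C > 0" unfolding C_def by simp
  have "(\<integral>\<omega>. (\<Sum>k=0..n. R k \<omega>)\<^sup>2 \<partial>M) \<le> C * real n" if n: "n \<ge> 1" for n
  proof -
    have "(\<integral>\<omega>. (\<Sum>k=0..n. R k \<omega>)\<^sup>2 \<partial>M) \<le> (\<Sum>k=0..n. \<Sum>k'=0..n. K_R * (self_weight k + cross_weight k k'))"
      unfolding second_moment_expand
    proof (intro sum_mono)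
      fix k k'
      show "(\<integral>\<omega>. R k \<omega> * R k' \<omega> \<partial>M) \<le> K_R * (self_weight k + cross_weight k k')"
        using R_product(2)[of k k'] unfolding sum_local_weight by (rule abs_le_D1)
    qed
    also have "\<dots> = K_R * (real (n + 1) * (\<Sum>k=0..n. self_weight k) + (\<Sum>k=0..n. \<Sum>k'=0..n. cross_weight k k'))"
      by (simp add: sum.distrib sum_distrib_left distrib_left mult_ac)
    also have "\<dots> \<le> K_R * (real (n + 1) * (real l * real l * CA) + (\<Sum>k=0..n. real l * real l * CB))"
      using self_weight_sum_le[of n] cross_weight_sum_le K_R_nonneg unfolding CA_def CB_def
      by (intro mult_left_mono add_mono sum_mono) auto
    also have "\<dots> = real (n + 1) * (K_R * real l * real l * (CA + CB))" by (simp add: algebra_simps)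
    also have "\<dots> \<le> (2 * real n) * (K_R * real l * real l * (CA + CB))"
      using n nonneg by (intro mult_right_mono) auto
    also have "\<dots> \<le> C * real n" unfolding C_def using n by (simp add: algebra_simps)
    finally show ?thesis .
  qed
  then show ?thesis using C_pos by blast
qed

end

theorem lemma3p2:
  fixes M :: "'a measure" and l :: nat and X :: "nat \<Rightarrow> nat \<Rightarrow> 'a \<Rightarrow> real" and D :: real
    and F :: "ereal \<Rightarrow> ereal \<Rightarrow> 'a measure" and q :: "nat \<Rightarrow> nat \<Rightarrow> nat"
    and \<kappa> :: real and r p :: nat and \<gamma> n0 :: real
  assumes "prob_space M" and "l \<ge> 1"
    and "\<forall>j\<in>{1..l}. \<forall>n. X j n \<in> borel_measurable M"
    and "\<forall>j\<in>{1..l}. stationary M (X j)"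
    and "\<forall>j\<in>{1..l}. \<forall>n. AE \<omega> in M. \<bar>X j n \<omega>\<bar> \<le> D"
    and "\<forall>k\<in>ZInf. \<forall>k'\<in>ZInf. subalgebra M (F k k')"
    and "\<forall>k\<in>ZInf. \<forall>k'\<in>ZInf. \<forall>m\<in>ZInf. \<forall>m'\<in>ZInf.
           m' \<le> k \<and> k' \<le> m \<longrightarrow> sets (F k k') \<subseteq> sets (F m' m)"
    and C1: "\<kappa> > 0"
      "\<forall>n. mixing_alpha M F n + Max ((\<lambda>j. approx_beta M F (X j) n) ` {1..l})
              \<le> exp (- \<kappa> * real n) / \<kappa>"
    and C2: "r > 0" "\<forall>n. q 1 n = r * n + p"
    and C34: "0 < \<gamma>" "\<gamma> < 1" "n0 > 1"
      "\<forall>n. real n \<ge> n0 \<longrightarrow> (\<forall>j\<in>{2..l}. real (q j (n + 1)) \<ge> real (q j n) + real n powr \<gamma>)"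
      "\<forall>n. real n \<ge> n0 \<longrightarrow> (\<forall>j\<in>{1..l-1}.
           real (q (j + 1) (nat \<lfloor>real n powr (1 - \<gamma>)\<rfloor>)) \<ge> real (q j n) * real n powr \<gamma>)"
  shows "\<exists>C>0. \<forall>n\<ge>1. (\<integral>\<omega>. (\<Sum>k=0..n. (\<Prod>j=1..l. X j (q j k) \<omega>)
                                 - (\<Prod>j=1..l. \<integral>\<omega>'. X j 0 \<omega>' \<partial>M))\<^sup>2 \<partial>M) \<le> C * real n"
proof -
  interpret nonconventional_setup M l X D F q \<kappa> r p \<gamma> n0
    by (rule nonconventional_setup.intro) fact+
  have "R k \<omega> = (\<Prod>j=1..l. X j (q j k) \<omega>) - (\<Prod>j=1..l. \<integral>\<omega>'. X j 0 \<omega>' \<partial>M)" for k \<omega>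
    unfolding R_def mean_def ..
  with second_moment_linear show ?thesis by simp
qed

end
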